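(* There exist $\delta_0 > 0$ and an absolute constant $C > 0$ such that for every $0 < \delta \leqslant \delta_0$ and all $m, n \in \mathbb{N}$ with $n$ even, the number of sum-free subsets $I \subset [n]$ with $|I| = m$ and $|I \setminus O_n| \leqslant \delta m$ is at most $2^{Cn/m} \binom{n/2}{m}$.
   Context: $[n] = \{1,\ldots,n\}$. A set of integers is sum-free if it contains no $x,y,z$ (not necessarily distinct) with $x+y=z$. $O_n$ is the set of odd numbers in $[n]$. The paper writes the bound as $2^{O(n/m)}\binom{n/2}{m}$, where $O(\cdot)$ hides an absolute constant. *)

theory Defs
  imports Complex_Main
begin

definition sum_free :: "nat set \<Rightarrow> bool" where
  "sum_free A \<longleftrightarrow> (\<forall>x\<in>A. \<forall>y\<in>A. \<forall>z\<in>A. x + y \<noteq> z)"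

definition odds_upto :: "nat \<Rightarrow> nat set" where
  "odds_upto n = {x \<in> {1..n}. odd x}"

end

theory Submission
  imports Defs
begin

text \<open>Split a sum-free \<open>I \<subseteq> [n]\<close> into its even part \<open>E\<close>, of size \<open>k \<le> \<delta> m\<close>, and its odd
  part \<open>A\<close>, of size \<open>m - k\<close>. Since \<open>I\<close> is sum-free, \<open>A\<close> is independent in the graph on the
  odd numbers joining \<open>x\<close> and \<open>y\<close> whenever \<open>|x - y|\<close> or \<open>x + y\<close> lies in \<open>E\<close>. This graph has
  maximum degree \<open>\<le> 3 k\<close> but \<open>\<Theta>(k n)\<close> edges, and a Kahn-type bound for the independence
  polynomial evaluated at \<open>x = m / (n/2 - m)\<close>, where \<open>(1 + x) ^ (n/2)\<close> is about
  \<open>(n/2 choose m) x ^ m\<close>, shows that each edge costs a factor \<open>exp (- \<Theta>(x\<^sup>2))\<close>. The resulting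
  saving pays for the \<open>(n/2 choose k)\<close> choices of \<open>E\<close> and the factor \<open>x ^ k\<close>, up to
  \<open>2 ^ O(n / m)\<close>; for sparse \<open>m\<close> only a bounded part of \<open>E\<close> is used, and for dense \<open>m\<close>
  there is no independent set of the required size at all.\<close>

section \<open>The independence polynomial of a graph\<close>

definition indep_set :: "('a \<Rightarrow> 'a \<Rightarrow> bool) \<Rightarrow> 'a set \<Rightarrow> bool" where
  "indep_set adj S \<longleftrightarrow> (\<forall>u\<in>S. \<forall>w\<in>S. \<not> adj u w)"

definition indep_poly :: "('a \<Rightarrow> 'a \<Rightarrow> bool) \<Rightarrow> real \<Rightarrow> 'a set \<Rightarrow> real" where
  "indep_poly adj x W = (\<Sum>S\<in>{S. S \<subseteq> W \<and> indep_set adj S}. x ^ card S)"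

definition degree_sum :: "('a \<Rightarrow> 'a \<Rightarrow> bool) \<Rightarrow> 'a set \<Rightarrow> nat" where
  "degree_sum adj W = (\<Sum>u\<in>W. card {w\<in>W. adj u w})"

lemma finite_indep_sets: "finite W \<Longrightarrow> finite {S. S \<subseteq> W \<and> indep_set adj S}"
  by (rule finite_subset[of _ "Pow W"]) auto

lemma indep_poly_empty: "indep_poly adj x {} = 1"
proof -
  have "{S. S \<subseteq> {} \<and> indep_set adj S} = {{}}" by (auto simp: indep_set_def)
  then show ?thesis by (simp add: indep_poly_def)
qed

lemma indep_poly_nonneg: "x \<ge> 0 \<Longrightarrow> indep_poly adj x W \<ge> 0"
  unfolding indep_poly_def by (intro sum_nonneg) auto

lemma indep_poly_mono:
  assumes "finite W2" "W1 \<subseteq> W2" "x \<ge> 0"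
  shows "indep_poly adj x W1 \<le> indep_poly adj x W2"
  unfolding indep_poly_def by (rule sum_mono2) (use assms finite_indep_sets in auto)

lemma card_indep_sets_mult_le_indep_poly:
  assumes "finite W" "x > 0"
  shows "real (card {S. S \<subseteq> W \<and> indep_set adj S \<and> card S = a}) * x ^ a \<le> indep_poly adj x W"
proof -
  have "real (card {S. S \<subseteq> W \<and> indep_set adj S \<and> card S = a}) * x ^ a
      = (\<Sum>S\<in>{S. S \<subseteq> W \<and> indep_set adj S \<and> card S = a}. x ^ card S)" by simp
  also have "\<dots> \<le> indep_poly adj x W" unfolding indep_poly_def
    by (rule sum_mono2) (use finite_indep_sets[OF assms(1)] assms(2) in auto)
  finally show ?thesis .
qed

lemma power_one_minus_le_half_linear:
  fixes p :: real
  assumes "0 \<le> p" "p \<le> 1" "real d * p \<le> 1"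
  shows "(1 - p) ^ d \<le> 1 - real d * p / 2"
proof -
  have "((1 - p) * (1 + p)) ^ d \<le> 1 ^ d"
    using assms by (intro power_mono) (auto simp: algebra_simps mult_le_one)
  then have prod: "(1 - p) ^ d * (1 + p) ^ d \<le> 1" by (simp add: power_mult_distrib)
  have "(1 - p) ^ d * (1 + real d * p) \<le> (1 - p) ^ d * (1 + p) ^ d"
    using Bernoulli_inequality[of p d] assms by (intro mult_left_mono) auto
  then have "(1 - p) ^ d * (1 + real d * p) \<le> 1" using prod by linarith
  moreover have "1 \<le> (1 - real d * p / 2) * (1 + real d * p)"
  proof -
    have "(1 - real d * p / 2) * (1 + real d * p) = 1 + real d * p / 2 * (1 - real d * p)"
      by (simp add: field_simps)
    then show ?thesis using assms by simp
  qed
  moreover have "1 + real d * p > 0" using assms by (simp add: add_pos_nonneg)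
  ultimately show ?thesis
    by (metis (no_types, opaque_lifting) mult_le_cancel_right_pos order_trans)
qed

lemma card_neighbours_mono:
  "finite W \<Longrightarrow> V \<subseteq> W \<Longrightarrow> card {w\<in>V. adj u w} \<le> card {w\<in>W. adj u w}"
  by (rule card_mono) auto

locale sym_graph =
  fixes adj :: "'a \<Rightarrow> 'a \<Rightarrow> bool"
  assumes irrefl: "\<not> adj v v"
    and sym: "adj u w \<Longrightarrow> adj w u"
begin

lemma indep_poly_remove_vertex:
  assumes fin: "finite W" and v: "v \<in> W"
  shows "indep_poly adj x W = indep_poly adj x (W - {v}) + x * indep_poly adj x (W - {v} - {w. adj v w})"
proof -
  let ?S = "{S. S \<subseteq> W \<and> indep_set adj S}"
  let ?S1 = "{S. S \<subseteq> W - {v} \<and> indep_set adj S}"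
  let ?T = "{T. T \<subseteq> W - {v} - {w. adj v w} \<and> indep_set adj T}"
  have split: "?S = ?S1 \<union> insert v ` ?T"
  proof (rule set_eqI, rule iffI)
    fix S assume S: "S \<in> ?S"
    show "S \<in> ?S1 \<union> insert v ` ?T"
    proof (cases "v \<in> S")
      case True
      then have "S - {v} \<in> ?T" "S = insert v (S - {v})" using S by (auto simp: indep_set_def)
      then show ?thesis by blast
    qed (use S in auto)
  next
    fix S assume "S \<in> ?S1 \<union> insert v ` ?T"
    then consider "S \<in> ?S1" | T where "T \<in> ?T" "S = insert v T" by blast
    then show "S \<in> ?S"
    proof cases
      case (2 T)
      then have "indep_set adj S" using irrefl sym unfolding indep_set_def by blast
      then show ?thesis using 2 v by auto
    qed auto
  qed
  have fin1: "finite ?S1" and finT: "finite ?T" using fin by (auto intro: finite_indep_sets)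
  have "indep_poly adj x W = (\<Sum>S\<in>?S1. x ^ card S) + (\<Sum>S\<in>insert v ` ?T. x ^ card S)"
    unfolding indep_poly_def split by (rule sum.union_disjoint) (use fin1 finT in auto)
  also have "(\<Sum>S\<in>insert v ` ?T. x ^ card S) = (\<Sum>T\<in>?T. x ^ card (insert v T))"
    by (rule sum.reindex[unfolded comp_def]) (auto simp: inj_on_def)
  also have "\<dots> = (\<Sum>T\<in>?T. x * x ^ card T)"
  proof (rule sum.cong[OF refl])
    fix T assume "T \<in> ?T"
    then have "finite T" "v \<notin> T" using fin finite_subset by auto
    then show "x ^ card (insert v T) = x * x ^ card T" by simp
  qed
  finally show ?thesis by (simp add: indep_poly_def sum_distrib_left)
qed

lemma indep_poly_le_remove_vertex:
  assumes "finite W" "v \<in> W" "x \<ge> 0"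
  shows "indep_poly adj x W \<le> (1 + x) * indep_poly adj x (W - {v})"
proof -
  have "indep_poly adj x (W - {v} - {w. adj v w}) \<le> indep_poly adj x (W - {v})"
    by (rule indep_poly_mono) (use assms in auto)
  then have "x * indep_poly adj x (W - {v} - {w. adj v w}) \<le> x * indep_poly adj x (W - {v})"
    using assms(3) by (rule mult_left_mono)
  then show ?thesis
    using indep_poly_remove_vertex[OF assms(1,2), of x] by (simp add: algebra_simps)
qed

lemma indep_poly_le_remove_set:
  assumes fin: "finite W" and Y: "Y \<subseteq> W" and x: "x \<ge> 0"
  shows "indep_poly adj x W \<le> (1 + x) ^ card Y * indep_poly adj x (W - Y)"
proof -
  have "finite Y" using fin Y finite_subset by auto
  then show ?thesis using Y
  proof (induction Y rule: finite_induct)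
    case (insert y Y)
    have "indep_poly adj x (W - Y) \<le> (1 + x) * indep_poly adj x (W - Y - {y})"
      by (rule indep_poly_le_remove_vertex) (use insert fin x in auto)
    moreover have "W - Y - {y} = W - insert y Y" by auto
    ultimately have "(1 + x) ^ card Y * indep_poly adj x (W - Y)
        \<le> (1 + x) ^ card Y * ((1 + x) * indep_poly adj x (W - insert y Y))"
      using x by (intro mult_left_mono) auto
    with insert show ?case by (simp add: algebra_simps)
  qed simp
qed

text \<open>Deleting a vertex of degree at most \<open>D\<close> costs a definite fraction of the
  independence polynomial: the independent sets through it weigh at least
  \<open>x / (1 + x) ^ (D + 1)\<close> of the total.\<close>

lemma indep_poly_remove_vertex_le:
  assumes fin: "finite W" and u: "u \<in> W" and x: "x > 0"
    and deg: "card {w\<in>W. adj u w} \<le> D"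
  shows "indep_poly adj x (W - {u}) \<le> (1 - x / (1 + x) ^ (D + 1)) * indep_poly adj x W"
proof -
  let ?R = "W - {u} - {w. adj u w}"
  let ?Y = "{w\<in>W - {u}. adj u w}"
  have rec: "indep_poly adj x W = indep_poly adj x (W - {u}) + x * indep_poly adj x ?R"
    by (rule indep_poly_remove_vertex[OF fin u])
  have R0: "indep_poly adj x ?R \<ge> 0" using x by (simp add: indep_poly_nonneg)
  have "card ?Y \<le> D"
    using deg by (rule order_trans[rotated]) (intro card_mono, use fin in auto)
  then have "(1 + x) ^ card ?Y \<le> (1 + x) ^ D"
    using x by (intro power_increasing) auto
  moreover have "indep_poly adj x (W - {u}) \<le> (1 + x) ^ card ?Y * indep_poly adj x (W - {u} - ?Y)"
    by (rule indep_poly_le_remove_set) (use fin x in auto)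
  moreover have "W - {u} - ?Y = ?R" by auto
  ultimately have A: "indep_poly adj x (W - {u}) \<le> (1 + x) ^ D * indep_poly adj x ?R"
    using R0 by (metis (no_types, lifting) mult_right_mono order_trans)
  have "x * 1 \<le> x * (1 + x) ^ D" using x by (intro mult_left_mono one_le_power) auto
  then have "x * indep_poly adj x ?R \<le> x * (1 + x) ^ D * indep_poly adj x ?R"
    using R0 by (intro mult_right_mono) auto
  then have "indep_poly adj x W \<le> ((1 + x) ^ D + x * (1 + x) ^ D) * indep_poly adj x ?R"
    using rec A by (simp add: distrib_right)
  then have B: "indep_poly adj x W \<le> (1 + x) ^ (D + 1) * indep_poly adj x ?R"
    by (simp add: algebra_simps)
  have pos: "(1 + x) ^ (D + 1) > 0" using x by simp
  have "x / (1 + x) ^ (D + 1) * indep_poly adj x W \<le> x * indep_poly adj x ?R"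
    using mult_left_mono[OF B, of "x / (1 + x) ^ (D + 1)"] pos x by simp
  then show ?thesis using rec by (simp add: algebra_simps)
qed

lemma indep_poly_remove_set_le:
  assumes fin: "finite W" and X: "X \<subseteq> W" and x: "x > 0"
    and deg: "\<And>u. u \<in> W \<Longrightarrow> card {w\<in>W. adj u w} \<le> D"
  shows "indep_poly adj x (W - X) \<le> (1 - x / (1 + x) ^ (D + 1)) ^ card X * indep_poly adj x W"
proof -
  let ?p = "x / (1 + x) ^ (D + 1)"
  have "?p \<le> x / (1 + x)"
    using x by (intro divide_left_mono) (auto intro!: power_increasing[where N="D+1" and n=1, simplified])
  also have "\<dots> \<le> 1" using x by simp
  finally have p1: "1 - ?p \<ge> 0" by simp
  have "finite X" using fin X finite_subset by auto
  then show ?thesis using X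
  proof (induction X rule: finite_induct)
    case (insert y X)
    have "card {w\<in>W - X. adj y w} \<le> card {w\<in>W. adj y w}"
      by (intro card_mono) (use fin in auto)
    also have "\<dots> \<le> D" using deg[of y] insert by auto
    finally have "indep_poly adj x (W - X - {y}) \<le> (1 - ?p) * indep_poly adj x (W - X)"
      by (intro indep_poly_remove_vertex_le) (use insert fin x in auto)
    also have "\<dots> \<le> (1 - ?p) * ((1 - ?p) ^ card X * indep_poly adj x W)"
      using insert p1 by (intro mult_left_mono) auto
    moreover have "W - X - {y} = W - insert y X" by auto
    ultimately show ?case using insert by (simp add: algebra_simps)
  qed simp
qed

lemma degree_sum_insert:
  assumes fin: "finite F" and v: "v \<notin> F"
  shows "degree_sum adj (insert v F) = degree_sum adj F + 2 * card {w\<in>F. adj v w}"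
proof -
  have own: "{w\<in>insert v F. adj v w} = {w\<in>F. adj v w}" using irrefl by auto
  have other: "card {w\<in>insert v F. adj u w} = card {w\<in>F. adj u w} + (if adj u v then 1 else 0)"
    if "u \<in> F" for u
  proof (cases "adj u v")
    case True
    then have "{w\<in>insert v F. adj u w} = insert v {w\<in>F. adj u w}" by auto
    then show ?thesis using True fin v by simp
  next
    case False
    then have "{w\<in>insert v F. adj u w} = {w\<in>F. adj u w}" by auto
    then show ?thesis using False by simp
  qed
  have incoming: "(\<Sum>u\<in>F. (if adj u v then 1 else 0::nat)) = card {w\<in>F. adj v w}"
  proof -
    have "{u\<in>F. adj u v} = {w\<in>F. adj v w}" using sym by blast
    then show ?thesis using fin by (simp add: sum.If_cases Int_def)
  qed
  have "degree_sum adj (insert v F)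
      = card {w\<in>insert v F. adj v w} + (\<Sum>u\<in>F. card {w\<in>insert v F. adj u w})"
    unfolding degree_sum_def using fin v by simp
  also have "(\<Sum>u\<in>F. card {w\<in>insert v F. adj u w})
      = (\<Sum>u\<in>F. card {w\<in>F. adj u w} + (if adj u v then 1 else 0))"
    by (rule sum.cong) (use other in auto)
  also have "\<dots> = degree_sum adj F + card {w\<in>F. adj v w}"
    unfolding sum.distrib degree_sum_def incoming ..
  finally show ?thesis using own by simp
qed

lemma degree_sum_le_indep_complement:
  assumes fin: "finite V" and S: "S \<subseteq> V" and ind: "indep_set adj S"
    and deg: "\<And>u. u \<in> V \<Longrightarrow> card {w\<in>V. adj u w} \<le> D"
  shows "degree_sum adj V \<le> 2 * D * card (V - S)"
proof -
  have finS: "finite S" using fin S finite_subset by auto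
  have into_S: "(\<Sum>u\<in>S. card {w\<in>V. adj u w}) = (\<Sum>u\<in>S. \<Sum>w\<in>V - S. if adj u w then 1 else 0)"
  proof (rule sum.cong[OF refl])
    fix u assume "u \<in> S"
    then have "{w\<in>V. adj u w} = {w\<in>V - S. adj u w}" using ind unfolding indep_set_def by auto
    then show "card {w\<in>V. adj u w} = (\<Sum>w\<in>V - S. if adj u w then 1 else 0)"
      using fin by (simp add: sum.If_cases Int_def)
  qed
  have from_S: "(\<Sum>u\<in>S. if adj u w then 1 else 0) \<le> D" if w: "w \<in> V - S" for w
  proof -
    have "(\<Sum>u\<in>S. if adj u w then 1 else 0) = card {u\<in>S. adj u w}"
      using finS by (simp add: sum.If_cases Int_def)
    also have "\<dots> \<le> card {u\<in>V. adj w u}" by (rule card_mono) (use fin S sym in auto)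
    also have "\<dots> \<le> D" using deg w by auto
    finally show ?thesis .
  qed
  have "degree_sum adj V = (\<Sum>u\<in>V - S. card {w\<in>V. adj u w}) + (\<Sum>u\<in>S. card {w\<in>V. adj u w})"
    unfolding degree_sum_def using sum.subset_diff[OF S fin] by simp
  also have "(\<Sum>u\<in>V - S. card {w\<in>V. adj u w}) \<le> (\<Sum>u\<in>V - S. D)"
    by (rule sum_mono) (use deg in auto)
  also have "(\<Sum>u\<in>S. card {w\<in>V. adj u w}) = (\<Sum>w\<in>V - S. \<Sum>u\<in>S. if adj u w then 1 else 0)"
    unfolding into_S by (rule sum.swap)
  also have "\<dots> \<le> (\<Sum>w\<in>V - S. D)" by (rule sum_mono) (rule from_S)
  finally show ?thesis by (simp add: algebra_simps)
qed

text \<open>Adding a vertex with \<open>d\<close> neighbours multiplies the independence polynomial by at most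
  \<open>(1 + x) exp (- 2 \<beta> d)\<close>: the sets through the new vertex avoid its neighbourhood, which
  costs a factor \<open>(1 - p) ^ d \<le> 1 - d p / 2\<close>.\<close>

lemma indep_poly_insert_le:
  fixes x :: real and D :: nat
  defines "\<beta> \<equiv> x\<^sup>2 / (4 * (1 + x) ^ (D + 2))"
  assumes fin: "finite F" and v: "v \<notin> F" and x: "x > 0"
    and deg: "\<And>u. u \<in> insert v F \<Longrightarrow> card {w\<in>insert v F. adj u w} \<le> D"
    and small: "real D * (x / (1 + x) ^ (D + 1)) \<le> 1"
  shows "indep_poly adj x (insert v F)
      \<le> (1 + x) * exp (- \<beta> * (2 * real (card {w\<in>F. adj v w}))) * indep_poly adj x F"
proof -
  define p where "p = x / (1 + x) ^ (D + 1)"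
  define d where "d = card {w\<in>F. adj v w}"
  have Z0: "indep_poly adj x F \<ge> 0" using x by (simp add: indep_poly_nonneg)
  have degF: "card {w\<in>F. adj u w} \<le> D" if "u \<in> insert v F" for u
  proof -
    have "card {w\<in>F. adj u w} \<le> card {w\<in>insert v F. adj u w}"
      using fin by (intro card_neighbours_mono) auto
    with deg[OF that] show ?thesis by linarith
  qed
  then have dD: "d \<le> D" unfolding d_def by simp
  have p0: "p \<ge> 0" unfolding p_def using x by simp
  have "p \<le> x / (1 + x)" unfolding p_def
    using x by (intro divide_left_mono) (auto intro!: power_increasing[where N="D+1" and n=1, simplified])
  also have "\<dots> \<le> 1" using x by simp
  finally have p1: "p \<le> 1" .
  have "real d * p \<le> real D * p" using dD p0 by (intro mult_right_mono) auto
  then have dp: "real d * p \<le> 1" using small unfolding p_def by linarith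
  have "indep_poly adj x (F - {w. adj v w}) = indep_poly adj x (F - {w\<in>F. adj v w})"
    by (rule arg_cong[where f="indep_poly adj x"]) auto
  also have "\<dots> \<le> (1 - p) ^ d * indep_poly adj x F"
    unfolding d_def p_def by (rule indep_poly_remove_set_le) (use fin x degF in auto)
  also have "\<dots> \<le> (1 - real d * p / 2) * indep_poly adj x F"
    using power_one_minus_le_half_linear[OF p0 p1 dp] Z0 by (rule mult_right_mono)
  finally have "indep_poly adj x (insert v F)
      \<le> indep_poly adj x F + x * ((1 - real d * p / 2) * indep_poly adj x F)"
    using indep_poly_remove_vertex[of "insert v F" v x] fin v x by (simp add: mult_left_mono)
  also have "\<dots> = (1 + x) * (1 - x * (real d * p) / (2 * (1 + x))) * indep_poly adj x F"
    using x by (simp add: field_simps)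
  also have "1 - x * (real d * p) / (2 * (1 + x)) \<le> exp (- (x * (real d * p) / (2 * (1 + x))))"
    by (rule exp_ge_add_one_self[of "- _", simplified])
  also have "x * (real d * p) / (2 * (1 + x)) = \<beta> * (2 * real d)"
  proof -
    have gen: "x * (real d * (x / (y * c))) / (2 * y) = x\<^sup>2 / (4 * (y\<^sup>2 * c)) * (2 * real d)"
      if "y > 0" "c > 0" for y c :: real
      using that by (simp add: field_simps power2_eq_square)
    have "(1 + x) ^ (D + 1) = (1 + x) * (1 + x) ^ D"
      and "(1 + x) ^ (D + 2) = (1 + x)\<^sup>2 * (1 + x) ^ D"
      by (simp_all add: power_add power2_eq_square mult.commute)
    then show ?thesis unfolding p_def \<beta>_def by (metis gen x add_pos_pos zero_less_one zero_less_power)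
  qed
  finally show ?thesis unfolding d_def using x Z0 by (simp add: mult_left_mono mult_right_mono)
qed

theorem indep_poly_le_exp_degree_sum:
  assumes fin: "finite W" and x: "x > 0"
    and deg: "\<And>u. u \<in> W \<Longrightarrow> card {w\<in>W. adj u w} \<le> D"
    and small: "real D * (x / (1 + x) ^ (D + 1)) \<le> 1"
  shows "indep_poly adj x W
      \<le> (1 + x) ^ card W * exp (- (x\<^sup>2 / (4 * (1 + x) ^ (D + 2))) * real (degree_sum adj W))"
  using fin deg
proof (induction W rule: finite_induct)
  case (insert v F)
  let ?\<beta> = "x\<^sup>2 / (4 * (1 + x) ^ (D + 2))"
  define d where "d = card {w\<in>F. adj v w}"
  have "indep_poly adj x (insert v F) \<le> (1 + x) * exp (- ?\<beta> * (2 * real d)) * indep_poly adj x F"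
    unfolding d_def by (rule indep_poly_insert_le) (use insert x small in auto)
  also have "indep_poly adj x F \<le> (1 + x) ^ card F * exp (- ?\<beta> * real (degree_sum adj F))"
  proof (rule insert.IH)
    fix u assume "u \<in> F"
    have "card {w\<in>F. adj u w} \<le> card {w\<in>insert v F. adj u w}"
      using insert by (intro card_neighbours_mono) auto
    with insert.prems[of u] \<open>u \<in> F\<close> show "card {w\<in>F. adj u w} \<le> D" by simp
  qed
  also have "(1 + x) * exp (- B * (2 * dd)) * ((1 + x) ^ c * exp (- B * P))
      = (1 + x) ^ Suc c * exp (- B * (P + 2 * dd))" for B P dd :: real and c :: nat
    by (simp add: algebra_simps exp_add[symmetric])
  finally show ?case
    using insert x degree_sum_insert[OF insert(1,2)] by (simp add: d_def mult_left_mono)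
qed (simp add: indep_poly_empty degree_sum_def)

end

section \<open>The sum graph of a set of even numbers on the odd numbers\<close>

definition sum_graph :: "nat set \<Rightarrow> nat \<Rightarrow> nat \<Rightarrow> bool" where
  "sum_graph E x y \<longleftrightarrow> x \<noteq> y \<and> (\<exists>e\<in>E. y = x + e \<or> x = y + e \<or> x + y = e)"

definition evens_upto :: "nat \<Rightarrow> nat set" where
  "evens_upto n = {x \<in> {1..n}. even x}"

definition indep_odd_sets :: "nat \<Rightarrow> nat set \<Rightarrow> nat \<Rightarrow> nat set set" where
  "indep_odd_sets n E a = {A. A \<subseteq> odds_upto n \<and> indep_set (sum_graph E) A \<and> card A = a}"

interpretation sum_graph: sym_graph "sum_graph E"
  by unfold_locales (auto simp: sum_graph_def add.commute)

lemma sum_graph_mono: "E' \<subseteq> E \<Longrightarrow> sum_graph E' u w \<Longrightarrow> sum_graph E u w"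
  unfolding sum_graph_def by auto

lemma indep_sum_graph_if_sum_free:
  assumes "sum_free I" "A \<subseteq> I" "E \<subseteq> I"
  shows "indep_set (sum_graph E) A"
  using assms unfolding indep_set_def sum_graph_def sum_free_def by blast

lemma finite_odds_upto: "finite (odds_upto n)"
  by (simp add: odds_upto_def)

lemma finite_evens_upto: "finite (evens_upto n)"
  by (simp add: evens_upto_def)

lemma card_odds_upto:
  assumes "even n"
  shows "card (odds_upto n) = n div 2"
proof -
  have "odds_upto n = (\<lambda>i. 2 * i + 1) ` {..<n div 2}"
    using assms by (auto simp: odds_upto_def image_iff elim!: oddE)
  then show ?thesis by (simp add: card_image inj_on_def)
qed

lemma card_evens_upto: "card (evens_upto n) = n div 2"
proof -
  have "evens_upto n = (\<lambda>i. 2 * i + 2) ` {..<n div 2}"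
  proof (rule set_eqI, rule iffI)
    fix x assume "x \<in> evens_upto n"
    then obtain j where "x = 2 * j" "1 \<le> j" "2 * j \<le> n" by (auto simp: evens_upto_def elim!: evenE)
    then show "x \<in> (\<lambda>i. 2 * i + 2) ` {..<n div 2}" by (auto simp: image_iff intro!: bexI[of _ "j - 1"])
  qed (auto simp: evens_upto_def)
  then show ?thesis by (simp add: card_image inj_on_def)
qed

lemma finite_indep_odd_sets: "finite (indep_odd_sets n E a)"
  unfolding indep_odd_sets_def
  by (rule finite_subset[of _ "Pow (odds_upto n)"]) (use finite_odds_upto in auto)

lemma card_indep_odd_sets_antimono:
  assumes "E' \<subseteq> E"
  shows "card (indep_odd_sets n E a) \<le> card (indep_odd_sets n E' a)"
  by (rule card_mono[OF finite_indep_odd_sets])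
    (use sum_graph_mono[OF assms] in \<open>auto simp: indep_odd_sets_def indep_set_def; blast\<close>)

lemma card_sum_graph_neighbours_le:
  assumes "finite E"
  shows "card {y\<in>V. sum_graph E x y} \<le> 3 * card E"
proof -
  have "{y\<in>V. sum_graph E x y} \<subseteq> (\<lambda>e. x + e) ` E \<union> (\<lambda>e. x - e) ` E \<union> (\<lambda>e. e - x) ` E"
    unfolding sum_graph_def by force
  then have "card {y\<in>V. sum_graph E x y}
      \<le> card ((\<lambda>e. x + e) ` E \<union> (\<lambda>e. x - e) ` E \<union> (\<lambda>e. e - x) ` E)"
    using assms by (intro card_mono) auto
  also have "\<dots> \<le> card ((\<lambda>e. x + e) ` E) + card ((\<lambda>e. x - e) ` E) + card ((\<lambda>e. e - x) ` E)"
    by (meson card_Un_le add_le_mono order_trans le_refl)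
  also have "\<dots> \<le> card E + card E + card E"
    by (intro add_mono card_image_le assms)
  finally show ?thesis by simp
qed

text \<open>Each even \<open>e \<noteq> 2 x\<close> yields the neighbour \<open>e - x\<close> or \<open>x - e\<close> of the odd vertex \<open>x\<close>,
  and each neighbour arises in this way from at most two \<open>e\<close>.\<close>

lemma card_le_sum_graph_neighbours:
  assumes x: "x \<in> odds_upto n" and E: "E \<subseteq> evens_upto n"
  shows "card E \<le> 2 * card {y\<in>odds_upto n. sum_graph E x y} + (if 2 * x \<in> E then 1 else 0)"
proof -
  let ?Nb = "{y\<in>odds_upto n. sum_graph E x y}"
  define E1 where "E1 = {e\<in>E. x < e \<and> e \<noteq> 2 * x}"
  define E2 where "E2 = {e\<in>E. e < x}"
  have finE: "finite E" using E finite_evens_upto finite_subset by blast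
  have xo: "odd x" "1 \<le> x" "x \<le> n" using x by (auto simp: odds_upto_def)
  have Eev: "even e" "1 \<le> e" "e \<le> n" if "e \<in> E" for e using E that by (auto simp: evens_upto_def)
  have "E \<subseteq> E1 \<union> E2 \<union> (E \<inter> {2 * x})"
  proof
    fix e assume e: "e \<in> E"
    then have "e \<noteq> x" using Eev[OF e] xo by auto
    then show "e \<in> E1 \<union> E2 \<union> (E \<inter> {2 * x})" using e unfolding E1_def E2_def by auto
  qed
  then have "card E \<le> card (E1 \<union> E2 \<union> (E \<inter> {2 * x}))"
    using finE by (intro card_mono) (auto simp: E1_def E2_def)
  also have "\<dots> \<le> card E1 + card E2 + card (E \<inter> {2 * x})"
    by (meson card_Un_le add_le_mono order_trans le_refl)
  finally have "card E \<le> card E1 + card E2 + card (E \<inter> {2 * x})" .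
  moreover have "card (E \<inter> {2 * x}) = (if 2 * x \<in> E then 1 else 0)" by auto
  moreover have "card E1 \<le> card ?Nb"
  proof (rule card_inj_on_le[of "\<lambda>e. e - x"])
    show "(\<lambda>e. e - x) ` E1 \<subseteq> ?Nb"
      using xo unfolding E1_def by (auto simp: odds_upto_def sum_graph_def dest: Eev)
  qed (auto simp: E1_def inj_on_def finite_odds_upto)
  moreover have "card E2 \<le> card ?Nb"
  proof (rule card_inj_on_le[of "\<lambda>e. x - e"])
    show "(\<lambda>e. x - e) ` E2 \<subseteq> ?Nb"
    proof (rule image_subsetI)
      fix e assume "e \<in> E2"
      then have "e \<in> E" "e < x" "even e" "1 \<le> e" unfolding E2_def using Eev by auto
      then show "x - e \<in> ?Nb" using xo by (auto simp: odds_upto_def sum_graph_def intro!: bexI[of _ e])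
    qed
  qed (auto simp: E2_def inj_on_def finite_odds_upto)
  ultimately show ?thesis by linarith
qed

lemma degree_sum_sum_graph_ge:
  assumes n: "even n" and E: "E \<subseteq> evens_upto n"
  shows "(n div 2) * card E \<le> 2 * degree_sum (sum_graph E) (odds_upto n) + card E"
proof -
  have "(n div 2) * card E = (\<Sum>x\<in>odds_upto n. card E)" using card_odds_upto[OF n] by simp
  also have "\<dots> \<le> (\<Sum>x\<in>odds_upto n. 2 * card {y\<in>odds_upto n. sum_graph E x y}
      + (if 2 * x \<in> E then 1 else 0))"
    by (rule sum_mono) (rule card_le_sum_graph_neighbours[OF _ E])
  also have "\<dots> = 2 * degree_sum (sum_graph E) (odds_upto n) + card {x\<in>odds_upto n. 2 * x \<in> E}"
    by (simp add: sum.distrib degree_sum_def sum_distrib_left sum.If_cases finite_odds_upto Int_def)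
  also have "card {x\<in>odds_upto n. 2 * x \<in> E} \<le> card E"
    using E finite_evens_upto finite_subset by (intro card_inj_on_le[of "\<lambda>x. 2 * x"]) (auto simp: inj_on_def)
  finally show ?thesis by simp
qed

text \<open>A single even number already gives all but one odd vertex a neighbour, while all degrees
  stay at most \<open>3\<close>; so an independent set must miss about a twelfth of the odd numbers.\<close>

lemma card_indep_odd_set_le:
  assumes n: "even n" and E: "E \<subseteq> evens_upto n" "E \<noteq> {}"
    and A: "A \<subseteq> odds_upto n" "indep_set (sum_graph E) A"
  shows "12 * card A \<le> 11 * (n div 2) + 1"
proof -
  obtain e where e: "e \<in> E" using E by blast
  have E1: "{e} \<subseteq> evens_upto n" using e E by auto
  have "indep_set (sum_graph {e}) A" using A(2) sum_graph_mono[of "{e}" E] e unfolding indep_set_def by blast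
  then have "degree_sum (sum_graph {e}) (odds_upto n) \<le> 2 * 3 * card (odds_upto n - A)"
    using card_sum_graph_neighbours_le[of "{e}" "odds_upto n"]
    by (intro sum_graph.degree_sum_le_indep_complement[OF finite_odds_upto A(1)]) auto
  moreover have "card (odds_upto n - A) = n div 2 - card A"
    using card_Diff_subset[OF finite_subset[OF A(1) finite_odds_upto] A(1)] card_odds_upto[OF n] by simp
  moreover have "n div 2 \<le> 2 * degree_sum (sum_graph {e}) (odds_upto n) + 1"
    using degree_sum_sum_graph_ge[OF n E1] by simp
  moreover have "card A \<le> n div 2"
    using card_mono[OF finite_odds_upto A(1)] card_odds_upto[OF n] by simp
  ultimately show ?thesis by linarith
qed

lemma card_indep_odd_sets_mult_le:
  fixes x :: real
  assumes n: "even n" and E: "E \<subseteq> evens_upto n" and x: "x > 0"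
    and small: "real (3 * card E) * (x / (1 + x) ^ (3 * card E + 1)) \<le> 1"
  shows "real (card (indep_odd_sets n E a)) * x ^ a
     \<le> (1 + x) ^ (n div 2) * exp (- (x\<^sup>2 / (4 * (1 + x) ^ (3 * card E + 2)))
          * ((real (n div 2) - 1) * real (card E) / 2))"
proof -
  let ?\<beta> = "x\<^sup>2 / (4 * (1 + x) ^ (3 * card E + 2))"
  let ?P = "degree_sum (sum_graph E) (odds_upto n)"
  have finE: "finite E" using E finite_evens_upto finite_subset by blast
  have "real (card (indep_odd_sets n E a)) * x ^ a \<le> indep_poly (sum_graph E) x (odds_upto n)"
    unfolding indep_odd_sets_def
    by (rule card_indep_sets_mult_le_indep_poly[OF finite_odds_upto x])
  also have "\<dots> \<le> (1 + x) ^ card (odds_upto n) * exp (- ?\<beta> * real ?P)"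
    by (rule sum_graph.indep_poly_le_exp_degree_sum)
      (use finite_odds_upto x card_sum_graph_neighbours_le[OF finE] small in auto)
  also have "\<dots> \<le> (1 + x) ^ (n div 2) * exp (- ?\<beta> * ((real (n div 2) - 1) * real (card E) / 2))"
  proof -
    have "real (n div 2) * real (card E) \<le> 2 * real ?P + real (card E)"
      using degree_sum_sum_graph_ge[OF n E] by (metis of_nat_add of_nat_le_iff of_nat_mult of_nat_numeral)
    then have "(real (n div 2) - 1) * real (card E) / 2 \<le> real ?P" by (simp add: algebra_simps)
    then have "?\<beta> * ((real (n div 2) - 1) * real (card E) / 2) \<le> ?\<beta> * real ?P"
      using x by (intro mult_left_mono) auto
    then show ?thesis using card_odds_upto[OF n] x by (simp add: mult_left_mono)
  qed
  finally show ?thesis .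
qed

section \<open>Binomial and analytic estimates\<close>

lemma power_one_plus_le_exp: "(z::real) \<ge> 0 \<Longrightarrow> (1 + z) ^ N \<le> exp (real N * z)"
proof -
  assume z: "z \<ge> 0"
  have "(1 + z) ^ N \<le> exp z ^ N"
    by (rule power_mono) (use z exp_ge_add_one_self[of z] in auto)
  also have "\<dots> = exp (real N * z)" by (simp add: exp_of_nat_mult)
  finally show ?thesis .
qed

lemma exp_minus_le_inverse: "(t::real) > 0 \<Longrightarrow> exp (- t) \<le> 1 / t"
proof -
  assume t: "t > 0"
  have "t \<le> exp t" using exp_ge_add_one_self[of t] by linarith
  then show ?thesis using t by (simp add: exp_minus field_simps)
qed

lemma binomial_Suc_mult_eq:
  assumes "j < N"
  shows "real (N choose Suc j) * real (Suc j) = real (N choose j) * real (N - j)"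
proof -
  have "Suc j * (N choose Suc j) = N * ((N - 1) choose j)"
    using Suc_times_binomial[of j "N - 1"] assms by simp
  moreover have "(N - j) * (N choose j) = N * ((N - 1) choose j)" by (rule binomial_absorb_comp)
  ultimately show ?thesis by (metis mult.commute of_nat_mult)
qed

text \<open>For \<open>x = m / (N - m)\<close> the largest term of \<open>(1 + x) ^ N = \<Sum>j. (N choose j) x ^ j\<close>
  is the one with \<open>j = m\<close>: the ratio of consecutive terms is \<open>x (N - j) / (j + 1)\<close>.\<close>

lemma binomial_term_le_mode:
  fixes N m :: nat
  assumes m: "0 < m" "m < N" and j: "j \<le> N"
  defines "x \<equiv> real m / real (N - m)"
  shows "real (N choose j) * x ^ j \<le> real (N choose m) * x ^ m"
proof -
  define t where "t j = real (N choose j) * x ^ j" for j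
  have x0: "x > 0" unfolding x_def using m by simp
  have Nm: "real (N - m) > 0" using m by simp
  have step: "t (Suc j) * real (Suc j) = t j * (x * real (N - j))" if "j < N" for j
    unfolding t_def using binomial_Suc_mult_eq[OF that] by (simp add: algebra_simps)
  have t0: "t j \<ge> 0" for j unfolding t_def using x0 by simp
  have up: "t j \<le> t (Suc j)" if "j < m" for j
  proof -
    have "real (Suc j) * real (N - m) \<le> real m * real (N - j)"
      using that m by (intro mult_mono) auto
    then have "real (Suc j) \<le> x * real (N - j)" unfolding x_def using Nm by (simp add: field_simps)
    then have "t j * real (Suc j) \<le> t (Suc j) * real (Suc j)"
      using step[of j] that m t0[of j] by (simp add: mult_left_mono)
    then show ?thesis by simp
  qed
  have down: "t (Suc j) \<le> t j" if "m \<le> j" "j < N" for j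
  proof -
    have "real m * real (N - j) \<le> real (Suc j) * real (N - m)"
      using that by (intro mult_mono) auto
    then have "x * real (N - j) \<le> real (Suc j)" unfolding x_def using Nm by (simp add: field_simps)
    then have "t (Suc j) * real (Suc j) \<le> t j * real (Suc j)"
      using step[OF that(2)] t0[of j] by (simp add: mult_left_mono)
    then show ?thesis by simp
  qed
  have "t j \<le> t m"
  proof (cases "j \<le> m")
    case True
    then show ?thesis
    proof (induction j rule: inc_induct)
      case (step i)
      then show ?case using up[of i] by linarith
    qed simp
  next
    case False
    then have "m \<le> j" by simp
    then show ?thesis
    proof (induction j rule: dec_induct)
      case (step i)
      then show ?case using down[of i] j by linarith
    qed simp
  qed
  then show ?thesis unfolding t_def .
qed

lemma power_one_plus_le_binomial_mode:
  fixes N m :: nat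
  assumes "0 < m" "m < N"
  defines "x \<equiv> real m / real (N - m)"
  shows "(1 + x) ^ N \<le> real (N + 1) * real (N choose m) * x ^ m"
proof -
  have "(1 + x) ^ N = (\<Sum>j\<le>N. real (N choose j) * x ^ j)"
    using binomial_ring[of x 1 N] by (simp add: add.commute mult.commute)
  also have "\<dots> \<le> (\<Sum>j\<le>N. real (N choose m) * x ^ m)"
    unfolding x_def by (intro sum_mono binomial_term_le_mode) (use assms in auto)
  finally show ?thesis by (simp add: mult.assoc)
qed

lemma sum_binomial_from_one_le:
  fixes y :: real
  assumes y: "y \<ge> 0"
  shows "(\<Sum>k\<in>{1..K}. real (N choose k) * y ^ k) \<le> real N * y * exp (real N * y)"
proof -
  define u where "u = real N * y"
  have "(\<Sum>k\<in>{1..K}. real (N choose k) * y ^ k) \<le> (\<Sum>k\<in>{1..N}. real (N choose k) * y ^ k)"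
  proof -
    have "(\<Sum>k\<in>{1..K}. real (N choose k) * y ^ k) \<le> (\<Sum>k\<in>{1..max K N}. real (N choose k) * y ^ k)"
      by (rule sum_mono2) (use y in auto)
    also have "\<dots> = (\<Sum>k\<in>{1..N}. real (N choose k) * y ^ k)"
      by (rule sum.mono_neutral_right) auto
    finally show ?thesis .
  qed
  also have "\<dots> = (1 + y) ^ N - 1"
  proof -
    have "(1 + y) ^ N = (\<Sum>k\<le>N. real (N choose k) * y ^ k)"
      using binomial_ring[of y 1 N] by (simp add: add.commute mult.commute)
    also have "{..N} = insert 0 {1..N}" by auto
    finally show ?thesis by simp
  qed
  also have "\<dots> \<le> exp u - 1" unfolding u_def using power_one_plus_le_exp[OF y] by simp
  also have "\<dots> \<le> u * exp u"
  proof -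
    have "(1 - u) * exp u \<le> exp (- u) * exp u"
      using exp_ge_add_one_self[of "- u"] by (intro mult_right_mono) auto
    then show ?thesis by (simp add: algebra_simps exp_minus_inverse)
  qed
  finally show ?thesis unfolding u_def .
qed

lemma sum_binomial_upto_le:
  fixes y t :: real
  assumes t: "0 < t" "t \<le> 1" and y: "y \<ge> 0" and K: "K \<le> N"
  shows "(\<Sum>k\<le>K. real (N choose k) * y ^ k) \<le> (1 + y * t) ^ N / t ^ K"
proof -
  have "(\<Sum>k\<le>K. real (N choose k) * y ^ k) \<le> (\<Sum>k\<le>K. real (N choose k) * (y * t) ^ k / t ^ K)"
  proof (rule sum_mono)
    fix k assume k: "k \<in> {..K}"
    have "t ^ K \<le> t ^ k" using t k by (intro power_decreasing) auto
    then have "1 \<le> t ^ k / t ^ K" using t by simp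
    then have "real (N choose k) * y ^ k * 1 \<le> real (N choose k) * y ^ k * (t ^ k / t ^ K)"
      using y by (intro mult_left_mono) auto
    then show "real (N choose k) * y ^ k \<le> real (N choose k) * (y * t) ^ k / t ^ K"
      by (simp add: power_mult_distrib)
  qed
  also have "\<dots> \<le> (\<Sum>k\<le>N. real (N choose k) * (y * t) ^ k / t ^ K)"
    by (rule sum_mono2) (use K t y in auto)
  also have "\<dots> = (1 + y * t) ^ N / t ^ K"
    using binomial_ring[of "y * t" 1 N] by (simp add: sum_divide_distrib add.commute mult.commute)
  finally show ?thesis .
qed

lemma ln_le_two_sqrt:
  assumes "y > 0" shows "ln y \<le> 2 * sqrt y"
proof -
  have "ln y = 2 * ln (sqrt y)" using assms by (simp add: ln_sqrt)
  also have "ln (sqrt y) \<le> sqrt y - 1" using assms by (intro ln_le_minus_one) auto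
  finally show ?thesis by simp
qed

lemma ln_le_three_cube_root:
  assumes "y > 0" shows "ln y \<le> 3 * y powr (1/3::real)"
proof -
  have "ln (y powr (1/3::real)) = ln y / 3" using assms by simp
  moreover have "ln (y powr (1/3::real)) \<le> y powr (1/3) - 1" using assms by (intro ln_le_minus_one) auto
  ultimately show ?thesis by simp
qed

lemma ln_Suc_le_sqrt_split:
  fixes N m b :: real
  assumes N: "N \<ge> 1" and m: "m > 0" and b: "b > 0"
  shows "ln (N + 1) \<le> 9 * b * N / m + m / b"
proof -
  have "ln (N + 1) \<le> 2 * sqrt (N + 1)" using N by (intro ln_le_two_sqrt) auto
  also have "sqrt (N + 1) \<le> sqrt 2 * sqrt N" using N by (simp add: real_sqrt_mult[symmetric])
  also have "sqrt 2 \<le> 3 / 2" by (rule real_le_lsqrt) (auto simp: power2_eq_square)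
  then have "2 * (sqrt 2 * sqrt N) \<le> 2 * (3 / 2 * sqrt N)" using N by (intro mult_left_mono mult_right_mono) auto
  finally have L: "ln (N + 1) \<le> 3 * sqrt N" by simp
  have sN: "sqrt N > 0" using N by simp
  show ?thesis
  proof (cases "m \<ge> 3 * b * sqrt N")
    case True
    then have "3 * sqrt N \<le> m / b" using b by (simp add: field_simps)
    moreover have "9 * b * N / m \<ge> 0" using b m N by simp
    ultimately show ?thesis using L by linarith
  next
    case False
    have "3 * sqrt N = 9 * b * sqrt N * sqrt N / (3 * b * sqrt N)" using b sN by simp
    also have "\<dots> \<le> 9 * b * sqrt N * sqrt N / m"
      using m False b sN by (intro divide_left_mono) auto
    also have "\<dots> = 9 * b * N / m" using N by simp
    finally have "3 * sqrt N \<le> 9 * b * N / m" .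
    moreover have "m / b \<ge> 0" using b m by simp
    ultimately show ?thesis using L by linarith
  qed
qed

lemma ln_Suc_le_cube_root_split:
  fixes N m :: real
  assumes N: "N \<ge> 1" and m: "m > 0"
  shows "ln (N + 1) \<le> 92 * N / m + m\<^sup>2 / (128 * N)"
proof -
  define w where "w = N powr (1/3)"
  have w0: "w > 0" unfolding w_def using N by simp
  have w3: "w ^ 3 = N"
  proof -
    have "w ^ 3 = w powr (real 3)" using powr_realpow[OF w0, of 3] by simp
    also have "\<dots> = N" unfolding w_def using N by (simp add: powr_powr)
    finally show ?thesis .
  qed
  have c2: "(2::real) powr (1/3) \<le> 4/3"
  proof -
    have "(2::real) \<le> (4/3) ^ 3" by (simp add: power3_eq_cube)
    then have "(2::real) powr (1/3) \<le> ((4/3::real) ^ 3) powr (1/3)" by (intro powr_mono2) auto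
    also have "((4/3::real) ^ 3) powr (1/3) = ((4/3) powr real 3) powr (1/3)"
      by (simp add: powr_realpow)
    also have "\<dots> = 4/3" unfolding powr_powr by simp
    finally show ?thesis .
  qed
  have "ln (N + 1) \<le> 3 * (N + 1) powr (1/3)" using N by (intro ln_le_three_cube_root) auto
  also have "(N + 1) powr (1/3) \<le> (2 * N) powr (1/3)" using N by (intro powr_mono2) auto
  also have "(2 * N) powr (1/3) = 2 powr (1/3) * w" unfolding w_def using N by (simp add: powr_mult)
  also have "2 powr (1/3) * w \<le> 4/3 * w" using c2 w0 by (intro mult_right_mono) auto
  finally have L: "ln (N + 1) \<le> 4 * w" by simp
  show ?thesis
  proof (cases "m \<ge> 23 * w\<^sup>2")
    case True
    then have "(23 * w\<^sup>2)\<^sup>2 / (128 * N) \<le> m\<^sup>2 / (128 * N)"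
      using w0 N by (intro divide_right_mono power_mono) auto
    moreover have "(23 * w\<^sup>2)\<^sup>2 / (128 * N) = 529 / 128 * w"
      unfolding w3[symmetric] using w0 by (simp add: field_simps power2_eq_square power3_eq_cube)
    moreover have "92 * N / m \<ge> 0" using N m by simp
    ultimately show ?thesis using L w0 by linarith
  next
    case False
    have "4 * w = 92 * N / (23 * w\<^sup>2)"
      unfolding w3[symmetric] using w0 by (simp add: field_simps power2_eq_square power3_eq_cube)
    also have "\<dots> \<le> 92 * N / m" using m False N w0 by (intro divide_left_mono) auto
    finally have "4 * w \<le> 92 * N / m" .
    moreover have "m\<^sup>2 / (128 * N) \<ge> 0" using N by simp
    ultimately show ?thesis using L by linarith
  qed
qed

lemma inverse_power_le_exp_sqrt:
  fixes \<delta> m :: real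
  assumes d: "0 < \<delta>" "\<delta> \<le> 1" and K: "real K \<le> \<delta> * m"
  shows "(1 / \<delta>) ^ K \<le> exp (2 * sqrt \<delta> * m)"
proof -
  have l0: "ln (1 / \<delta>) \<ge> 0" using d by simp
  have l1: "ln (1 / \<delta>) \<le> 2 * sqrt (1 / \<delta>)" using d by (intro ln_le_two_sqrt) auto
  have dm: "\<delta> * m \<ge> 0" using K by (metis of_nat_0_le_iff order_trans)
  have "(1 / \<delta>) ^ K = exp (real K * ln (1 / \<delta>))" using d by (simp add: exp_of_nat_mult)
  also have "real K * ln (1 / \<delta>) \<le> \<delta> * m * ln (1 / \<delta>)" using K l0 by (rule mult_right_mono)
  also have "\<dots> \<le> \<delta> * m * (2 * sqrt (1 / \<delta>))" using l1 dm by (rule mult_left_mono)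
  also have "\<delta> * m * (2 * sqrt (1 / \<delta>)) = 2 * sqrt \<delta> * m"
  proof -
    have "\<delta> = sqrt \<delta> * sqrt \<delta>" using d by simp
    then have "\<delta> * sqrt (1 / \<delta>) = sqrt \<delta>" using d by (simp add: real_sqrt_divide field_simps)
    then show ?thesis by (simp add: algebra_simps)
  qed
  finally show ?thesis by simp
qed

lemma sum_binomial_upto_delta_le:
  fixes x \<delta> :: real
  assumes x: "x \<ge> 0" and d: "0 < \<delta>" "\<delta> \<le> 1" and K: "real K \<le> \<delta> * real m" and KN: "K \<le> N"
  shows "(\<Sum>k\<in>{1..K}. real (N choose k) * x ^ k) \<le> exp (real N * x * \<delta> + 2 * sqrt \<delta> * real m)"
proof -
  have "(\<Sum>k\<in>{1..K}. real (N choose k) * x ^ k) \<le> (\<Sum>k\<le>K. real (N choose k) * x ^ k)"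
    by (rule sum_mono2) (use x in auto)
  also have "\<dots> \<le> (1 + x * \<delta>) ^ N / \<delta> ^ K" by (rule sum_binomial_upto_le) (use d x KN in auto)
  also have "\<dots> = (1 + x * \<delta>) ^ N * (1 / \<delta>) ^ K" by (simp add: power_one_over)
  also have "\<dots> \<le> exp (real N * (x * \<delta>)) * exp (2 * sqrt \<delta> * real m)"
    using power_one_plus_le_exp[of "x * \<delta>" N] inverse_power_le_exp_sqrt[OF d K] x d
    by (intro mult_mono) auto
  also have "\<dots> = exp (real N * x * \<delta> + 2 * sqrt \<delta> * real m)" by (simp add: exp_add mult.assoc)
  finally show ?thesis .
qed

lemma Suc_mult_tail_sum_le_exp:
  fixes x \<delta> P c :: real
  assumes x: "x \<ge> 0" and d: "0 < \<delta>" "\<delta> \<le> 1" and K: "real K \<le> \<delta> * real m" and mN: "m \<le> N"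
    and N: "N \<ge> 1"
    and budget: "ln (real N + 1) - P + (real N * x * \<delta> + 2 * sqrt \<delta> * real m) \<le> c"
  shows "real (N + 1) * (\<Sum>k\<in>{1..K}. real (N choose k) * x ^ k * exp (- P)) \<le> exp c"
proof -
  have "\<delta> * real m \<le> 1 * real m" using d by (intro mult_right_mono) auto
  then have "real K \<le> real m" using K by linarith
  then have KN: "K \<le> N" using mN by simp
  have "real (N + 1) * (\<Sum>k\<in>{1..K}. real (N choose k) * x ^ k * exp (- P))
      = exp (ln (real N + 1)) * exp (- P) * (\<Sum>k\<in>{1..K}. real (N choose k) * x ^ k)"
  proof -
    have "real (N + 1) = exp (ln (real N + 1))" using N by simp
    moreover have "(\<Sum>k\<in>{1..K}. real (N choose k) * x ^ k * exp (- P))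
        = (\<Sum>k\<in>{1..K}. real (N choose k) * x ^ k) * exp (- P)"
      by (simp add: sum_distrib_right)
    ultimately show ?thesis by (simp only: mult_ac)
  qed
  also have "\<dots> \<le> exp (ln (real N + 1)) * exp (- P) * exp (real N * x * \<delta> + 2 * sqrt \<delta> * real m)"
    by (intro mult_left_mono sum_binomial_upto_delta_le) (use x d K KN in auto)
  also have "\<dots> = exp (ln (real N + 1) + - P + (real N * x * \<delta> + 2 * sqrt \<delta> * real m))"
    by (simp only: exp_add)
  also have "\<dots> \<le> exp c" using budget by simp
  finally show ?thesis .
qed

lemma le_sqrt_if_le_one:
  assumes "0 \<le> \<delta>" "\<delta> \<le> 1"
  shows "(\<delta>::real) \<le> sqrt \<delta>"
proof -
  have "\<delta> = sqrt \<delta> * sqrt \<delta>" using assms by simp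
  also have "\<dots> \<le> sqrt \<delta> * 1" using assms by (intro mult_left_mono) auto
  finally show ?thesis by simp
qed

lemma tail_sum_medium_le:
  fixes x \<delta> :: real
  assumes m: "1 \<le> m" "m \<le> N" and x: "0 \<le> x" "x \<le> 20"
    and d: "0 < \<delta>" "\<delta> \<le> 1" "sqrt \<delta> \<le> 1 / 2^50" and K: "real K \<le> \<delta> * real m"
  shows "real (N + 1) * (\<Sum>k\<in>{1..K}. real (N choose k) * x ^ k * exp (- (real N / 2^40)))
         \<le> exp (9 * 2^42 * real N / real m)"
proof (rule Suc_mult_tail_sum_le_exp[OF x(1) d(1,2) K m(2)])
  have N1: "real N \<ge> 1" using m by simp
  have "real N * x * \<delta> \<le> real N * 20 * sqrt \<delta>"
    using x d le_sqrt_if_le_one[of \<delta>] N1 by (intro mult_mono) auto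
  moreover have "2 * sqrt \<delta> * real m \<le> 2 * sqrt \<delta> * real N" using m d by (intro mult_left_mono) auto
  moreover have "22 * sqrt \<delta> * real N \<le> real N / 2^41" using d N1 by simp
  moreover have "ln (real N + 1) \<le> 9 * 2^42 * real N / real m + real m / 2^42"
    using ln_Suc_le_sqrt_split[of "real N" "real m" "2^42"] N1 m by simp
  moreover have "real m / 2^42 \<le> real N / 2^42" using m by simp
  ultimately show "ln (real N + 1) - real N / 2^40 + (real N * x * \<delta> + 2 * sqrt \<delta> * real m)
      \<le> 9 * 2^42 * real N / real m"
    by (simp add: algebra_simps)
qed (use m in auto)

lemma tail_sum_sparse_capped_le:
  fixes x \<gamma> \<delta> :: real
  assumes m: "1 \<le> m" "100 * m \<le> N"
    and x: "x = real m / real (N - m)" and g: "\<gamma> = x\<^sup>2 * real N / 64"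
    and L: "real L \<ge> 1 / (6 * x)"
    and d: "0 < \<delta>" "\<delta> \<le> 1" "sqrt \<delta> \<le> 1 / 3072" and K: "real K \<le> \<delta> * real m"
  shows "real (N + 1) * (\<Sum>k\<in>{1..K}. real (N choose k) * x ^ k * exp (- (\<gamma> * real L)))
         \<le> exp (6912 * real N / real m)"
proof -
  have Nm: "real (N - m) > 0" "2 * real (N - m) \<ge> real N" using m by auto
  have N1: "real N \<ge> 1" and m0: "real m > 0" using m by auto
  have x0: "x > 0" using x Nm m by simp
  have xm: "x * real N \<ge> real m"
  proof -
    have "real m / real N \<le> x" unfolding x using Nm m0 by (intro divide_left_mono) auto
    then show ?thesis using N1 by (simp add: field_simps)
  qed
  have xN2: "real N * x \<le> 2 * real m"
    unfolding x using Nm m0 by (simp add: field_simps mult_right_mono)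
  have gL: "\<gamma> * real L \<ge> real m / 384"
  proof -
    have "\<gamma> \<ge> 0" unfolding g by simp
    then have "\<gamma> * (1 / (6 * x)) \<le> \<gamma> * real L" using L by (intro mult_left_mono) auto
    moreover have "\<gamma> * (1 / (6 * x)) = x * real N / 384"
      unfolding g using x0 by (simp add: power2_eq_square field_simps)
    ultimately show ?thesis using xm by simp
  qed
  show ?thesis
  proof (rule Suc_mult_tail_sum_le_exp[OF less_imp_le[OF x0] d(1,2) K])
    have "real N * x * \<delta> \<le> 2 * real m * \<delta>" using xN2 d by (intro mult_right_mono) auto
    also have "\<dots> \<le> 2 * real m * sqrt \<delta>"
      using le_sqrt_if_le_one[of \<delta>] d m0 by (intro mult_left_mono) auto
    finally have "real N * x * \<delta> \<le> 2 * real m * sqrt \<delta>" .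
    moreover have "4 * sqrt \<delta> * real m \<le> real m / 768" using d m0 by simp
    moreover have "ln (real N + 1) \<le> 6912 * real N / real m + real m / 768"
      using ln_Suc_le_sqrt_split[of "real N" "real m" 768] N1 m0 by simp
    ultimately show "ln (real N + 1) - \<gamma> * real L + (real N * x * \<delta> + 2 * sqrt \<delta> * real m)
        \<le> 6912 * real N / real m"
      using gL by (simp add: algebra_simps)
  qed (use m in auto)
qed

lemma Suc_mult_exp_minus_le:
  fixes t :: real
  assumes N: "1 \<le> N" and m: "0 < m" and t: "(real m)\<^sup>2 / (128 * real N) \<le> t"
  shows "real (N + 1) * exp (- t) \<le> exp (92 * real N / real m)"
proof -
  have "ln (real N + 1) - t \<le> 92 * real N / real m"
    using ln_Suc_le_cube_root_split[of "real N" "real m"] N m t by simp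
  then have "exp (ln (real N + 1) - t) \<le> exp (92 * real N / real m)" by simp
  moreover have "exp (ln (real N + 1) - t) = exp (ln (real N + 1)) * exp (- t)"
    by (simp only: diff_conv_add_uminus exp_add)
  moreover have "exp (ln (real N + 1)) = real (N + 1)" by simp
  ultimately show ?thesis by simp
qed

text \<open>Without truncation the decay \<open>exp (- \<gamma> k)\<close> alone pays for the sum, because
  \<open>N x exp (- \<gamma>)\<close> and \<open>(N + 1) exp (- \<gamma> / 2)\<close> are both \<open>exp (O (N / m))\<close>.\<close>

lemma tail_sum_sparse_decay_le:
  fixes x \<gamma> :: real
  assumes m: "1 \<le> m" "100 * m \<le> N"
    and x: "x = real m / real (N - m)" and g: "\<gamma> = x\<^sup>2 * real N / 64"
  shows "real (N + 1) * (\<Sum>k\<in>{1..K}. real (N choose k) * x ^ k * exp (- \<gamma> * real k))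
         \<le> exp (284 * real N / real m)"
proof -
  have Nm: "real (N - m) > 0" "real (N - m) \<le> real N" using m by auto
  have N1: "real N \<ge> 1" and m0: "real m > 0" using m by auto
  have x0: "x > 0" using x Nm m by simp
  have xm: "x \<ge> real m / real N" unfolding x using Nm m0 by (intro divide_left_mono) auto
  have g0: "\<gamma> > 0" unfolding g using x0 N1 by simp
  have gx: "\<gamma> = x * (real N * x) / 64" using g by (simp add: power2_eq_square)
  define u where "u = real N * (x * exp (- \<gamma>))"
  have "(\<Sum>k\<in>{1..K}. real (N choose k) * x ^ k * exp (- \<gamma> * real k))
       = (\<Sum>k\<in>{1..K}. real (N choose k) * (x * exp (- \<gamma>)) ^ k)"
    by (rule sum.cong) (auto simp: power_mult_distrib exp_of_nat_mult[symmetric] mult.commute)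
  also have "\<dots> \<le> u * exp u" unfolding u_def using sum_binomial_from_one_le[where y="x * exp (- \<gamma>)" and K=K and N=N] x0
    by (simp add: mult.assoc)
  finally have S: "(\<Sum>k\<in>{1..K}. real (N choose k) * x ^ k * exp (- \<gamma> * real k)) \<le> u * exp u" .
  have decay: "real N * x * exp (- t) \<le> 64 * (\<gamma> / t) * real N / real m" if "t > 0" for t
  proof -
    have "real N * x * exp (- t) \<le> real N * x * (1 / t)"
      using exp_minus_le_inverse[OF that] x0 N1 by (intro mult_left_mono) auto
    also have "\<dots> = 64 * (\<gamma> / t) / x" using gx x0 N1 that by (simp add: field_simps)
    also have "\<dots> \<le> 64 * (\<gamma> / t) / (real m / real N)"
      using xm m0 N1 x0 g0 that by (intro divide_left_mono) auto
    finally show ?thesis by simp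
  qed
  have u1: "u \<le> 64 * real N / real m" using decay[OF g0] g0 unfolding u_def by (simp add: mult.assoc)
  have "real N * x * exp (- (\<gamma> / 2)) \<le> 128 * real N / real m" using decay[of "\<gamma> / 2"] g0 by simp
  also have "\<dots> \<le> exp (128 * real N / real m)"
    using exp_ge_add_one_self[of "128 * real N / real m"] by linarith
  finally have u2: "real N * x * exp (- (\<gamma> / 2)) \<le> exp (128 * real N / real m)" .
  have "(real m / real N)\<^sup>2 * real N / 128 \<le> \<gamma> / 2"
    unfolding g using xm m0 N1 by (simp add: divide_right_mono mult_right_mono power_mono)
  then have u3: "real (N + 1) * exp (- (\<gamma> / 2)) \<le> exp (92 * real N / real m)"
    using N1 m0 by (intro Suc_mult_exp_minus_le) (simp_all add: power2_eq_square field_simps)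
  have "real (N + 1) * (\<Sum>k\<in>{1..K}. real (N choose k) * x ^ k * exp (- \<gamma> * real k))
      \<le> real (N + 1) * (u * exp u)" using S by (intro mult_left_mono) auto
  also have "\<dots> = (real (N + 1) * exp (- (\<gamma> / 2))) * (real N * x * exp (- (\<gamma> / 2))) * exp u"
    unfolding u_def by (simp add: algebra_simps exp_add[symmetric])
  also have "\<dots> \<le> exp (92 * real N / real m) * exp (128 * real N / real m) * exp (64 * real N / real m)"
    using u1 u2 u3 x0 N1 by (intro mult_mono) auto
  also have "\<dots> = exp (284 * real N / real m)"
    by (simp add: exp_add[symmetric] add_divide_distrib[symmetric])
  finally show ?thesis .
qed

section \<open>Counting sum-free sets with few even elements\<close>

text \<open>Removing the maximum \<open>M\<close> of a sum-free \<open>I\<close>, the rest \<open>S\<close> and its reflection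
  \<open>M - S\<close> are disjoint subsets of \<open>{1..<M}\<close>.\<close>

lemma sum_free_card_le:
  assumes I: "I \<subseteq> {1..n}" and sf: "sum_free I"
  shows "2 * card I \<le> n + 1"
proof (cases "I = {}")
  case False
  have finI: "finite I" using I finite_subset by blast
  define M where "M = Max I"
  define S where "S = I - {M}"
  have MI: "M \<in> I" unfolding M_def using finI False by simp
  then have Mn: "1 \<le> M" "M \<le> n" using I by auto
  have S: "1 \<le> x \<and> x < M" if "x \<in> S" for x
  proof -
    have "x \<in> I" "x \<noteq> M" using that unfolding S_def by auto
    moreover have "x \<le> M" unfolding M_def using finI \<open>x \<in> I\<close> by simp
    ultimately show ?thesis using I by auto
  qed
  have finS: "finite S" unfolding S_def using finI by simp
  have inj: "inj_on (\<lambda>x. M - x) S" by (rule inj_onI) (use S in fastforce)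
  have disj: "S \<inter> (\<lambda>x. M - x) ` S = {}"
  proof (rule ccontr)
    assume "S \<inter> (\<lambda>x. M - x) ` S \<noteq> {}"
    then obtain x y where "x \<in> S" "y \<in> S" "x + y = M" using S by force
    then show False using sf MI unfolding sum_free_def S_def by blast
  qed
  have "card S + card S = card (S \<union> (\<lambda>x. M - x) ` S)"
    using card_Un_disjoint[OF finS finite_imageI[OF finS] disj] card_image[OF inj] by simp
  also have "\<dots> \<le> card {1..<M}" by (rule card_mono) (use S in force)+
  finally have "2 * card S \<le> M - 1" by simp
  moreover have "card I = card S + 1" unfolding S_def using card_Suc_Diff1[OF finI MI] by simp
  ultimately show ?thesis using Mn by linarith
qed simp

definition sum_free_family :: "nat \<Rightarrow> nat \<Rightarrow> real \<Rightarrow> nat set set" where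
  "sum_free_family n m \<delta> = {I. I \<subseteq> {1..n} \<and> sum_free I \<and> card I = m
      \<and> real (card (I - odds_upto n)) \<le> \<delta> * real m}"

lemma card_sum_free_family_le_two_power: "card (sum_free_family n m \<delta>) \<le> 2 ^ n"
proof -
  have "card (sum_free_family n m \<delta>) \<le> card (Pow {1..n})"
    unfolding sum_free_family_def by (rule card_mono) auto
  then show ?thesis by (simp add: card_Pow)
qed

lemma card_sum_free_family_zero: "card (sum_free_family n 0 \<delta>) \<le> 1"
proof -
  have "sum_free_family n 0 \<delta> \<subseteq> {{}}"
  proof
    fix I assume "I \<in> sum_free_family n 0 \<delta>"
    then have "I \<subseteq> {1..n}" "card I = 0" unfolding sum_free_family_def by auto
    then show "I \<in> {{}}" using finite_subset[of I "{1..n}"] by simp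
  qed
  then have "card (sum_free_family n 0 \<delta>) \<le> card {{}::nat set}" by (rule card_mono[rotated]) simp
  then show ?thesis by simp
qed

lemma sum_free_family_eq_empty:
  assumes "even n" "n div 2 < m"
  shows "sum_free_family n m \<delta> = {}"
proof -
  have "2 * m \<le> n + 1" if "I \<in> sum_free_family n m \<delta>" for I
    using sum_free_card_le[of I n] that unfolding sum_free_family_def by auto
  then show ?thesis using assms by fastforce
qed

lemma sum_free_family_parts:
  assumes "I \<in> sum_free_family n m \<delta>"
  shows "I \<inter> odds_upto n \<in> indep_odd_sets n (I \<inter> evens_upto n) (m - card (I \<inter> evens_upto n))"
    and "I = I \<inter> odds_upto n \<union> I \<inter> evens_upto n"
    and "I \<inter> evens_upto n \<subseteq> evens_upto n"
    and "real (card (I \<inter> evens_upto n)) \<le> \<delta> * real m"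
proof -
  have I: "I \<subseteq> {1..n}" "sum_free I" "card I = m" "real (card (I - odds_upto n)) \<le> \<delta> * real m"
    using assms unfolding sum_free_family_def by auto
  have split: "{1..n} = odds_upto n \<union> evens_upto n" "odds_upto n \<inter> evens_upto n = {}"
    unfolding odds_upto_def evens_upto_def by auto
  show parts: "I = I \<inter> odds_upto n \<union> I \<inter> evens_upto n" using I(1) split by blast
  show "I \<inter> evens_upto n \<subseteq> evens_upto n" by blast
  have "I - odds_upto n = I \<inter> evens_upto n" using I(1) split by blast
  then show "real (card (I \<inter> evens_upto n)) \<le> \<delta> * real m" using I(4) by simp
  have "card I = card (I \<inter> odds_upto n) + card (I \<inter> evens_upto n)"
    by (subst parts, rule card_Un_disjoint) (use split finite_odds_upto finite_evens_upto in auto)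
  then show "I \<inter> odds_upto n \<in> indep_odd_sets n (I \<inter> evens_upto n) (m - card (I \<inter> evens_upto n))"
    using I(2,3) indep_sum_graph_if_sum_free[OF I(2)] unfolding indep_odd_sets_def by auto
qed

lemma sum_subsets_by_card:
  assumes V: "finite V" and K: "finite K"
  shows "(\<Sum>E\<in>{E. E \<subseteq> V \<and> card E \<in> K}. f (card E)) = (\<Sum>k\<in>K. real (card V choose k) * f k)"
proof -
  have fin: "finite {E. E \<subseteq> V \<and> card E = k}" for k
    using finite_Collect_subsets[OF V] by (rule rev_finite_subset) auto
  have "{E. E \<subseteq> V \<and> card E \<in> K} = (\<Union>k\<in>K. {E. E \<subseteq> V \<and> card E = k})" by auto
  then have "(\<Sum>E\<in>{E. E \<subseteq> V \<and> card E \<in> K}. f (card E))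
      = (\<Sum>k\<in>K. \<Sum>E\<in>{E. E \<subseteq> V \<and> card E = k}. f (card E))"
    by (simp only:) (rule sum.UNION_disjoint, use K fin in auto)
  also have "\<dots> = (\<Sum>k\<in>K. \<Sum>E\<in>{E. E \<subseteq> V \<and> card E = k}. f k)"
    by (intro sum.cong) auto
  finally show ?thesis by (simp add: n_subsets[OF V])
qed

text \<open>A sum-free \<open>I\<close> is determined by its even part \<open>E\<close> and its odd part, which is independent
  in \<open>sum_graph E\<close>; \<open>E = {}\<close> leaves at most \<open>(n div 2 choose m)\<close> choices.\<close>

lemma sum_free_family_subset_Union:
  "sum_free_family n m \<delta> \<subseteq> {A. A \<subseteq> odds_upto n \<and> card A = m}
     \<union> (\<Union>E\<in>{E. E \<subseteq> evens_upto n \<and> card E \<in> {1..nat \<lfloor>\<delta> * real m\<rfloor>}}.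
          (\<lambda>A. A \<union> E) ` indep_odd_sets n E (m - card E))"
proof
  fix I assume I: "I \<in> sum_free_family n m \<delta>"
  note parts = sum_free_family_parts[OF I]
  define E where "E = I \<inter> evens_upto n"
  show "I \<in> {A. A \<subseteq> odds_upto n \<and> card A = m}
     \<union> (\<Union>E\<in>{E. E \<subseteq> evens_upto n \<and> card E \<in> {1..nat \<lfloor>\<delta> * real m\<rfloor>}}.
          (\<lambda>A. A \<union> E) ` indep_odd_sets n E (m - card E))"
  proof (cases "E = {}")
    case True
    then show ?thesis using parts(1,2) unfolding E_def indep_odd_sets_def by auto
  next
    case False
    have "finite E" unfolding E_def using finite_evens_upto by simp
    then have "card E \<in> {1..nat \<lfloor>\<delta> * real m\<rfloor>}" using False parts(4) unfolding E_def
      by (auto simp: Suc_le_eq card_gt_0_iff le_nat_floor)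
    then show ?thesis using parts(1-3) unfolding E_def by blast
  qed
qed

lemma card_sum_free_family_le_sum:
  assumes n: "even n"
  shows "card (sum_free_family n m \<delta>) \<le> ((n div 2) choose m)
    + (\<Sum>E\<in>{E. E \<subseteq> evens_upto n \<and> card E \<in> {1..nat \<lfloor>\<delta> * real m\<rfloor>}}.
         card (indep_odd_sets n E (m - card E)))"
proof -
  let ?F0 = "{A. A \<subseteq> odds_upto n \<and> card A = m}"
  let ?\<E> = "{E. E \<subseteq> evens_upto n \<and> card E \<in> {1..nat \<lfloor>\<delta> * real m\<rfloor>}}"
  let ?U = "\<Union>E\<in>?\<E>. (\<lambda>A. A \<union> E) ` indep_odd_sets n E (m - card E)"
  have fin\<E>: "finite ?\<E>"
    using finite_Collect_subsets[OF finite_evens_upto] by (rule rev_finite_subset) auto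
  have finF0: "finite ?F0"
    using finite_Collect_subsets[OF finite_odds_upto] by (rule rev_finite_subset) auto
  have "card (sum_free_family n m \<delta>) \<le> card (?F0 \<union> ?U)"
    by (rule card_mono[OF _ sum_free_family_subset_Union]) (use finF0 fin\<E> finite_indep_odd_sets in auto)
  also have "\<dots> \<le> card ?F0 + card ?U" by (rule card_Un_le)
  also have "card ?U \<le> (\<Sum>E\<in>?\<E>. card ((\<lambda>A. A \<union> E) ` indep_odd_sets n E (m - card E)))"
    by (rule card_UN_le[OF fin\<E>])
  also have "\<dots> \<le> (\<Sum>E\<in>?\<E>. card (indep_odd_sets n E (m - card E)))"
    by (intro sum_mono card_image_le finite_indep_odd_sets)
  also have "card ?F0 = (n div 2) choose m"
    using n_subsets[OF finite_odds_upto] card_odds_upto[OF n] by simp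
  finally show ?thesis by simp
qed

lemma card_sum_free_family_le:
  fixes g :: "nat \<Rightarrow> real"
  assumes n: "even n"
    and per_E: "\<And>E. E \<subseteq> evens_upto n \<Longrightarrow> E \<noteq> {} \<Longrightarrow> real (card E) \<le> \<delta> * real m \<Longrightarrow>
      real (card (indep_odd_sets n E (m - card E))) \<le> g (card E)"
  shows "real (card (sum_free_family n m \<delta>))
    \<le> real ((n div 2) choose m) + (\<Sum>k\<in>{1..nat \<lfloor>\<delta> * real m\<rfloor>}. real ((n div 2) choose k) * g k)"
proof -
  define K where "K = nat \<lfloor>\<delta> * real m\<rfloor>"
  have per_E': "real (card (indep_odd_sets n E (m - card E))) \<le> g (card E)"
    if "E \<subseteq> evens_upto n" "card E \<in> {1..K}" for E
  proof (rule per_E)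
    have "0 \<le> \<delta> * real m" using that unfolding K_def by (cases "0 \<le> \<delta> * real m") auto
    then have "real K \<le> \<delta> * real m" unfolding K_def by (simp add: of_nat_floor)
    then show "real (card E) \<le> \<delta> * real m" using that by (meson atLeastAtMost_iff of_nat_le_iff order_trans)
  qed (use that in auto)
  have "real (card (sum_free_family n m \<delta>)) \<le> real ((n div 2) choose m)
    + (\<Sum>E\<in>{E. E \<subseteq> evens_upto n \<and> card E \<in> {1..K}}. real (card (indep_odd_sets n E (m - card E))))"
    using card_sum_free_family_le_sum[OF n, of m \<delta>] unfolding K_def
    by (simp flip: of_nat_sum of_nat_add)
  also have "\<dots> \<le> real ((n div 2) choose m) + (\<Sum>E\<in>{E. E \<subseteq> evens_upto n \<and> card E \<in> {1..K}}. g (card E))"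
    using per_E' by (intro add_left_mono sum_mono) auto
  also have "\<dots> = real ((n div 2) choose m) + (\<Sum>k\<in>{1..K}. real ((n div 2) choose k) * g k)"
    using sum_subsets_by_card[OF finite_evens_upto, of "{1..K}" g n] by (simp add: card_evens_upto)
  finally show ?thesis unfolding K_def .
qed

lemma le_mult_power_cancel:
  fixes c B x :: real
  assumes x: "x > 0" and km: "k \<le> m" and le: "c * x ^ (m - k) \<le> B * x ^ m"
  shows "c \<le> B * x ^ k"
proof -
  have "x ^ m = x ^ k * x ^ (m - k)" using km by (simp flip: power_add)
  then show ?thesis using le x by (simp add: mult.assoc)
qed

text \<open>Counting via the independence polynomial at \<open>x = m / (N - m)\<close>, where
  \<open>(1 + x) ^ N \<approx> (N choose m) x ^ m\<close>; the edges created by any \<open>E' \<subseteq> E\<close> give the saving.\<close>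

lemma card_indep_odd_sets_le_mode:
  fixes x :: real
  assumes n: "even n" and m: "0 < m" "m < n div 2"
    and E: "E' \<subseteq> E" "E \<subseteq> evens_upto n" "card E \<le> m"
    and x: "x = real m / real (n div 2 - m)"
    and small: "real (3 * card E') * (x / (1 + x) ^ (3 * card E' + 1)) \<le> 1"
  shows "real (card (indep_odd_sets n E (m - card E)))
      \<le> real (n div 2 + 1) * real (n div 2 choose m) * x ^ card E
        * exp (- (x\<^sup>2 / (4 * (1 + x) ^ (3 * card E' + 2))) * ((real (n div 2) - 1) * real (card E') / 2))"
proof -
  let ?N = "n div 2"
  let ?pen = "exp (- (x\<^sup>2 / (4 * (1 + x) ^ (3 * card E' + 2))) * ((real ?N - 1) * real (card E') / 2))"
  have x0: "x > 0" using x m by simp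
  have "real (card (indep_odd_sets n E (m - card E))) * x ^ (m - card E)
      \<le> real (card (indep_odd_sets n E' (m - card E))) * x ^ (m - card E)"
    using card_indep_odd_sets_antimono[OF E(1)] x0 by (intro mult_right_mono) auto
  also have "\<dots> \<le> (1 + x) ^ ?N * ?pen"
    using E by (intro card_indep_odd_sets_mult_le[OF n _ x0 small]) auto
  also have "\<dots> \<le> (real (?N + 1) * real (?N choose m) * ?pen) * x ^ m"
    using power_one_plus_le_binomial_mode[of m ?N] m unfolding x[symmetric]
    by (simp add: mult_right_mono mult_ac)
  finally show ?thesis by (rule le_mult_power_cancel[OF x0 E(3), THEN order_trans]) (simp add: mult_ac)
qed

lemma medium_exponent_ge:
  fixes x :: real
  assumes x: "1/100 \<le> x" "x \<le> 20" and N: "2 \<le> N"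
  shows "N / 2^40 \<le> x\<^sup>2 / (4 * (1 + x) ^ 5) * ((N - 1) / 2)"
proof -
  have "(1 + x) ^ 5 \<le> 21 ^ 5" using x by (intro power_mono) auto
  moreover have "(1/100)\<^sup>2 \<le> x\<^sup>2" using x by (intro power_mono) auto
  ultimately have "(1/100::real)\<^sup>2 / (4 * 21 ^ 5) \<le> x\<^sup>2 / (4 * (1 + x) ^ 5)"
    using x by (intro frac_le) auto
  moreover have "1 / 2^38 \<le> (1/100::real)\<^sup>2 / (4 * 21 ^ 5)" by (simp add: power2_eq_square)
  ultimately have "1 / 2^38 * (N / 4) \<le> x\<^sup>2 / (4 * (1 + x) ^ 5) * ((N - 1) / 2)"
    using N by (intro mult_mono) auto
  then show ?thesis by simp
qed

lemma card_indep_odd_sets_medium_le: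
  fixes x :: real
  assumes n: "even n" and m: "1 \<le> m" "n div 2 < 100 * m" "20 * m < 19 * (n div 2)"
    and E: "E \<subseteq> evens_upto n" "E \<noteq> {}" "card E \<le> m"
  defines "x \<equiv> real m / real (n div 2 - m)"
  shows "real (card (indep_odd_sets n E (m - card E)))
      \<le> real (n div 2 + 1) * real (n div 2 choose m) * x ^ card E * exp (- (real (n div 2) / 2^40))"
proof -
  let ?N = "n div 2"
  obtain e where e: "e \<in> E" using E by blast
  have Nm: "real (?N - m) > 0" "20 * real (?N - m) > real ?N" using m by auto
  have "?N \<ge> 2" using m by linarith
  then have N2: "real ?N \<ge> 2" by simp
  have x0: "x > 0" unfolding x_def using Nm m by simp
  have xlo: "1/100 \<le> x"
  proof -
    have "1/100 \<le> real m / real ?N" using m N2 by (simp add: field_simps)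
    also have "\<dots> \<le> x" unfolding x_def using Nm m by (intro divide_left_mono) auto
    finally show ?thesis .
  qed
  have xhi: "x \<le> 20"
  proof -
    have "x \<le> real ?N / real (?N - m)" unfolding x_def using Nm by (intro divide_right_mono) auto
    also have "\<dots> \<le> 20" using Nm by (simp add: field_simps)
    finally show ?thesis .
  qed
  have small: "real (3 * card {e}) * (x / (1 + x) ^ (3 * card {e} + 1)) \<le> 1"
  proof -
    have "1 + real 4 * x \<le> (1 + x) ^ 4" by (rule Bernoulli_inequality) (use x0 in simp)
    then show ?thesis using x0 by (simp add: field_simps)
  qed
  have "real ?N / 2^40 \<le> x\<^sup>2 / (4 * (1 + x) ^ 5) * ((real ?N - 1) * real (card {e}) / 2)"
    using medium_exponent_ge[OF xlo xhi N2] by simp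
  then have "exp (- (x\<^sup>2 / (4 * (1 + x) ^ (3 * card {e} + 2))) * ((real ?N - 1) * real (card {e}) / 2))
      \<le> exp (- (real ?N / 2^40))" by (simp add: eval_nat_numeral)
  moreover have "real (card (indep_odd_sets n E (m - card E)))
      \<le> real (?N + 1) * real (?N choose m) * x ^ card E
        * exp (- (x\<^sup>2 / (4 * (1 + x) ^ (3 * card {e} + 2))) * ((real ?N - 1) * real (card {e}) / 2))"
    by (rule card_indep_odd_sets_le_mode[OF n _ _ _ E(1,3) _ small]) (use m e in \<open>auto simp: x_def\<close>)
  ultimately show ?thesis using x0 by (smt (verit) mult_left_mono zero_le_power of_nat_0_le_iff
        mult_nonneg_nonneg)
qed

lemma one_plus_power_le_four:
  fixes x :: real
  assumes x: "0 < x" "x \<le> 1/99" and kx: "real (3 * k) * x \<le> 1"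
  shows "(1 + x) ^ (3 * k + 2) \<le> 4"
proof -
  have "(1 + x) ^ (3 * k) \<le> exp (real (3 * k) * x)" by (rule power_one_plus_le_exp) (use x in simp)
  also have "\<dots> \<le> exp 1" using kx by simp
  also have "exp 1 \<le> (3::real)" by (rule exp_le)
  finally have "(1 + x) ^ (3 * k) \<le> 3" .
  moreover have "(1 + x) ^ 2 \<le> (1 + 1/99) ^ 2" using x by (intro power_mono) auto
  ultimately have "(1 + x) ^ (3 * k) * (1 + x) ^ 2 \<le> 3 * (4 / 3)"
    using x by (intro mult_mono) (auto simp: power2_eq_square)
  then show ?thesis by (simp only: power_add)
qed

lemma sparse_exponent_ge:
  fixes x :: real
  assumes x: "0 < x" "x \<le> 1/99" and kx: "real (3 * k) * x \<le> 1" and N: "2 \<le> N"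
  shows "x\<^sup>2 * real N / 64 * real k \<le> x\<^sup>2 / (4 * (1 + x) ^ (3 * k + 2)) * ((real N - 1) * real k / 2)"
proof -
  have "x\<^sup>2 / 16 \<le> x\<^sup>2 / (4 * (1 + x) ^ (3 * k + 2))"
    using one_plus_power_le_four[OF x kx] x by (intro divide_left_mono) auto
  moreover have "real N * real k / 4 \<le> (real N - 1) * real k / 2"
    using mult_right_mono[of 2 "real N" "real k"] N by (simp add: field_simps)
  ultimately have "x\<^sup>2 / 16 * (real N * real k / 4) \<le> x\<^sup>2 / (4 * (1 + x) ^ (3 * k + 2)) * ((real N - 1) * real k / 2)"
    using N x by (intro mult_mono) auto
  then show ?thesis by simp
qed

text \<open>For sparse \<open>m\<close> only a sub-family \<open>E' \<subseteq> E\<close> of at most \<open>L \<approx> 1 / (3 x)\<close> even numbers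
  is used, so that the maximum degree \<open>3 |E'|\<close> keeps \<open>(1 + x) ^ (3 |E'| + 2)\<close> bounded.\<close>

lemma card_indep_odd_sets_sparse_le:
  fixes x \<gamma> :: real
  assumes n: "even n" and m: "1 \<le> m" "100 * m \<le> n div 2"
    and E: "E \<subseteq> evens_upto n" "E \<noteq> {}" "card E \<le> m"
  defines "x \<equiv> real m / real (n div 2 - m)"
  defines "\<gamma> \<equiv> x\<^sup>2 * real (n div 2) / 64"
  defines "L \<equiv> nat \<lfloor>1 / (3 * x)\<rfloor>"
  shows "real (card (indep_odd_sets n E (m - card E)))
      \<le> real (n div 2 + 1) * real (n div 2 choose m) * x ^ card E
        * (exp (- \<gamma> * real (card E)) + exp (- (\<gamma> * real L)))"
proof -
  let ?N = "n div 2"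
  define k' where "k' = min (card E) L"
  have Nm: "real (?N - m) \<ge> 99 * real m" using m by auto
  have x0: "x > 0" unfolding x_def using Nm m by simp
  have xhi: "x \<le> 1/99" unfolding x_def using Nm m by (simp add: field_simps)
  have L3: "real L \<le> 1 / (3 * x)" unfolding L_def using x0 by (simp add: of_nat_floor)
  have "1 \<le> 1 / (3 * x)" using x0 xhi by (simp add: field_simps)
  then have L1: "1 \<le> L" unfolding L_def by (simp add: le_nat_floor)
  have "finite E" using E finite_evens_upto finite_subset by blast
  then have k'1: "1 \<le> k'" unfolding k'_def using E L1 by (simp add: Suc_le_eq card_gt_0_iff)
  obtain E' where E': "E' \<subseteq> E" "card E' = k'"
    using obtain_subset_with_card_n[of k' E] k'_def by auto
  have k'x: "real (3 * k') * x \<le> 1"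
  proof -
    have "real (3 * k') * x \<le> 3 * real L * x" unfolding k'_def using x0 by (intro mult_right_mono) auto
    also have "\<dots> \<le> 3 * (1 / (3 * x)) * x" using L3 x0 by (intro mult_right_mono) auto
    finally show ?thesis using x0 by simp
  qed
  have small: "real (3 * card E') * (x / (1 + x) ^ (3 * card E' + 1)) \<le> 1"
  proof -
    have "1 \<le> (1 + x) ^ (3 * k' + 1)" using x0 by (intro one_le_power) simp
    then have "x / (1 + x) ^ (3 * k' + 1) \<le> x" using x0 by (simp add: divide_le_eq)
    then have "real (3 * k') * (x / (1 + x) ^ (3 * k' + 1)) \<le> real (3 * k') * x"
      by (intro mult_left_mono) auto
    then show ?thesis using k'x E'(2) by simp
  qed
  have "\<gamma> * real k' \<le> x\<^sup>2 / (4 * (1 + x) ^ (3 * k' + 2)) * ((real ?N - 1) * real k' / 2)"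
    unfolding \<gamma>_def by (rule sparse_exponent_ge) (use x0 xhi k'x m in auto)
  then have "exp (- (x\<^sup>2 / (4 * (1 + x) ^ (3 * card E' + 2))) * ((real ?N - 1) * real (card E') / 2))
      \<le> exp (- \<gamma> * real (card E)) + exp (- (\<gamma> * real L))"
    unfolding E'(2) k'_def by (cases "card E \<le> L") (auto simp: min_def add_increasing2 add_increasing)
  moreover have "real (card (indep_odd_sets n E (m - card E)))
      \<le> real (?N + 1) * real (?N choose m) * x ^ card E
        * exp (- (x\<^sup>2 / (4 * (1 + x) ^ (3 * card E' + 2))) * ((real ?N - 1) * real (card E') / 2))"
    by (rule card_indep_odd_sets_le_mode[OF n _ _ E'(1) E(1,3) _ small]) (use m in \<open>auto simp: x_def\<close>)
  ultimately show ?thesis using x0 by (smt (verit) mult_left_mono zero_le_power of_nat_0_le_iff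
        mult_nonneg_nonneg)
qed

lemma one_plus_le_two_powr:
  fixes T \<alpha> :: real
  assumes m: "1 \<le> m" "m \<le> N" and \<alpha>: "\<alpha> \<ge> 0" and T: "T \<le> 2 * exp (\<alpha> * real N / real m)"
  shows "1 + T \<le> 2 powr ((\<alpha> + 1) * real (2 * N) / real m)"
proof -
  define y where "y = \<alpha> * real N / real m"
  have y0: "y \<ge> 0" unfolding y_def using \<alpha> by simp
  have "exp 1 \<le> (4::real)" using exp_le by simp
  then have "1 \<le> ln (4::real)" by (subst ln_ge_iff) auto
  also have "ln (4::real) = 2 * ln 2" using ln_realpow[of 2 2] by simp
  finally have "y \<le> 2 * y * ln 2" using mult_left_mono[of 1 "2 * ln 2" y] y0 by (simp add: algebra_simps)
  then have ey: "exp y \<le> 2 powr (2 * y)" by (simp add: powr_def)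
  have "1 + T \<le> 4 * exp y" using T y0 unfolding y_def by (smt (verit) one_le_exp_iff)
  also have "\<dots> \<le> 2 powr 2 * 2 powr (2 * y)" using ey by simp
  also have "\<dots> = 2 powr (2 + 2 * y)" by (simp add: powr_add)
  also have "\<dots> \<le> 2 powr ((\<alpha> + 1) * real (2 * N) / real m)"
  proof (rule powr_mono)
    have "2 \<le> 2 * real N / real m" using m by (simp add: field_simps)
    moreover have "(\<alpha> + 1) * real (2 * N) / real m = 2 * y + 2 * real N / real m"
      unfolding y_def by (simp add: add_divide_distrib[symmetric] algebra_simps)
    ultimately show "2 + 2 * y \<le> (\<alpha> + 1) * real (2 * N) / real m" by linarith
  qed simp
  finally show ?thesis .
qed

lemma exp_scaled_mono:
  fixes c c' :: real
  shows "c \<le> c' \<Longrightarrow> exp (c * real N / real m) \<le> exp (c' * real N / real m)"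
  by (simp add: divide_right_mono mult_right_mono)

lemma card_sum_free_family_le_powr:
  fixes h :: "nat \<Rightarrow> real"
  assumes n: "even n" and m: "1 \<le> m" "m \<le> n div 2"
    and per_E: "\<And>E. E \<subseteq> evens_upto n \<Longrightarrow> E \<noteq> {} \<Longrightarrow> real (card E) \<le> \<delta> * real m \<Longrightarrow>
      real (card (indep_odd_sets n E (m - card E))) \<le> real (n div 2 choose m) * h (card E)"
    and tail: "(\<Sum>k\<in>{1..nat \<lfloor>\<delta> * real m\<rfloor>}. real (n div 2 choose k) * h k)
      \<le> 2 * exp (2^46 * real (n div 2) / real m)"
  shows "real (card (sum_free_family n m \<delta>))
      \<le> 2 powr ((2^46 + 1) * real n / real m) * real (n div 2 choose m)"
proof -
  let ?B = "real (n div 2 choose m)"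
  let ?T = "\<Sum>k\<in>{1..nat \<lfloor>\<delta> * real m\<rfloor>}. real (n div 2 choose k) * h k"
  have "real (card (sum_free_family n m \<delta>))
      \<le> ?B + (\<Sum>k\<in>{1..nat \<lfloor>\<delta> * real m\<rfloor>}. real (n div 2 choose k) * (?B * h k))"
    by (rule card_sum_free_family_le[OF n]) (use per_E in auto)
  also have "\<dots> = ?B * (1 + ?T)" by (simp add: sum_distrib_left algebra_simps)
  also have "\<dots> \<le> ?B * 2 powr ((2^46 + 1) * real (2 * (n div 2)) / real m)"
    using one_plus_le_two_powr[OF m _ tail] by (intro mult_left_mono) auto
  finally show ?thesis using n by (simp add: mult.commute)
qed

lemma card_sum_free_family_small_m:
  assumes m: "1 \<le> m" "m \<le> n div 2" "real m \<le> C"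
  shows "real (card (sum_free_family n m \<delta>)) \<le> 2 powr (C * real n / real m) * real (n div 2 choose m)"
proof -
  have "real (card (sum_free_family n m \<delta>)) \<le> 2 powr real n"
    using card_sum_free_family_le_two_power[of n m \<delta>] by (simp add: powr_realpow)
  also have "\<dots> \<le> 2 powr (C * real n / real m)"
    using m mult_left_mono[of "real m" C "real n"] by (intro powr_mono) (auto simp: field_simps)
  also have "\<dots> \<le> 2 powr (C * real n / real m) * real (n div 2 choose m)"
    using m by (simp add: Suc_le_eq)
  finally show ?thesis .
qed

lemma small_delta_bounds:
  assumes "0 < \<delta>" "\<delta> \<le> 1 / 2^100" "real k \<le> \<delta> * real m"
  shows "\<delta> \<le> 1" "sqrt \<delta> \<le> 1 / 2^50" "1000 * k \<le> m"
proof -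
  show "\<delta> \<le> 1" using assms by simp
  have "sqrt \<delta> \<le> sqrt ((1 / 2^50)\<^sup>2)" using assms by (simp add: power2_eq_square)
  then show "sqrt \<delta> \<le> 1 / 2^50" by simp
  have "1000 * real k \<le> 1000 / 2^100 * real m"
    using assms mult_right_mono[of \<delta> "1 / 2^100" "real m"] by simp
  also have "\<dots> \<le> real m" by simp
  finally show "1000 * k \<le> m" by linarith
qed

lemma card_sum_free_family_dense:
  assumes n: "even n" and m: "3 \<le> m" "m \<le> n div 2" "19 * (n div 2) \<le> 20 * m"
    and \<delta>: "0 < \<delta>" "\<delta> \<le> 1 / 2^100"
  shows "real (card (sum_free_family n m \<delta>))
      \<le> 2 powr ((2^46 + 1) * real n / real m) * real (n div 2 choose m)"
proof (rule card_sum_free_family_le_powr[OF n _ m(2), where h = "\<lambda>_. 0"])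
  fix E assume E: "E \<subseteq> evens_upto n" "E \<noteq> {}" "real (card E) \<le> \<delta> * real m"
  have "indep_odd_sets n E (m - card E) = {}"
  proof (rule ccontr)
    assume "indep_odd_sets n E (m - card E) \<noteq> {}"
    then obtain A where "A \<subseteq> odds_upto n" "indep_set (sum_graph E) A" "card A = m - card E"
      unfolding indep_odd_sets_def by blast
    then have "12 * (m - card E) \<le> 11 * (n div 2) + 1"
      using card_indep_odd_set_le[OF n E(1,2)] by metis
    then show False using small_delta_bounds(3)[OF \<delta> E(3)] m by linarith
  qed
  then show "real (card (indep_odd_sets n E (m - card E))) \<le> real (n div 2 choose m) * 0" by simp
qed (use m in auto)

lemma card_sum_free_family_medium:
  assumes n: "even n" and m: "1 \<le> m" "n div 2 < 100 * m" "20 * m < 19 * (n div 2)"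
    and \<delta>: "0 < \<delta>" "\<delta> \<le> 1 / 2^100"
  shows "real (card (sum_free_family n m \<delta>))
      \<le> 2 powr ((2^46 + 1) * real n / real m) * real (n div 2 choose m)"
proof -
  let ?N = "n div 2"
  define x where "x = real m / real (?N - m)"
  define K where "K = nat \<lfloor>\<delta> * real m\<rfloor>"
  have x0: "x \<ge> 0" unfolding x_def by simp
  have xhi: "x \<le> 20"
  proof -
    have "x \<le> real ?N / real (?N - m)" unfolding x_def using m by (intro divide_right_mono) auto
    also have "\<dots> \<le> 20" using m by (simp add: field_simps)
    finally show ?thesis .
  qed
  have K: "real K \<le> \<delta> * real m" unfolding K_def using \<delta> by (simp add: of_nat_floor)
  show ?thesis
  proof (rule card_sum_free_family_le_powr[OF n m(1),
        where h = "\<lambda>k. real (?N + 1) * x ^ k * exp (- (real ?N / 2^40))"])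
    fix E assume E: "E \<subseteq> evens_upto n" "E \<noteq> {}" "real (card E) \<le> \<delta> * real m"
    have "card E \<le> m" using small_delta_bounds(3)[OF \<delta> E(3)] by linarith
    then show "real (card (indep_odd_sets n E (m - card E)))
        \<le> real (?N choose m) * (real (?N + 1) * x ^ card E * exp (- (real ?N / 2^40)))"
      using card_indep_odd_sets_medium_le[OF n m E(1,2)] unfolding x_def by (simp add: mult_ac)
  next
    have "(\<Sum>k\<in>{1..K}. real (?N choose k) * (real (?N + 1) * x ^ k * exp (- (real ?N / 2^40))))
        = real (?N + 1) * (\<Sum>k\<in>{1..K}. real (?N choose k) * x ^ k * exp (- (real ?N / 2^40)))"
      by (simp add: sum_distrib_left mult_ac)
    also have "\<dots> \<le> exp (9 * 2^42 * real ?N / real m)"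
      by (rule tail_sum_medium_le) (use m x0 xhi K \<delta> small_delta_bounds[OF \<delta> K] in auto)
    also have "\<dots> \<le> exp (2^46 * real ?N / real m)" by (rule exp_scaled_mono) simp
    also have "\<dots> \<le> 2 * exp (2^46 * real ?N / real m)" by simp
    finally show "(\<Sum>k\<in>{1..nat \<lfloor>\<delta> * real m\<rfloor>}. real (?N choose k)
        * (real (?N + 1) * x ^ k * exp (- (real ?N / 2^40)))) \<le> 2 * exp (2^46 * real ?N / real m)"
      unfolding K_def .
  qed (use m x0 in auto)
qed

lemma card_sum_free_family_sparse:
  assumes n: "even n" and m: "1 \<le> m" "100 * m \<le> n div 2"
    and \<delta>: "0 < \<delta>" "\<delta> \<le> 1 / 2^100"
  shows "real (card (sum_free_family n m \<delta>))
      \<le> 2 powr ((2^46 + 1) * real n / real m) * real (n div 2 choose m)"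
proof -
  let ?N = "n div 2"
  define x where "x = real m / real (?N - m)"
  define \<gamma> where "\<gamma> = x\<^sup>2 * real ?N / 64"
  define L where "L = nat \<lfloor>1 / (3 * x)\<rfloor>"
  define K where "K = nat \<lfloor>\<delta> * real m\<rfloor>"
  have x0: "x > 0" and xhi: "x \<le> 1/99" unfolding x_def using m by (auto simp: field_simps)
  have L6: "real L \<ge> 1 / (6 * x)"
  proof -
    have "1 / (3 * x) - 1 \<le> real L"
      unfolding L_def using x0 real_of_int_floor_gt_diff_one[of "1 / (3 * x)"] by simp
    moreover have "1 \<le> 1 / (6 * x)" using x0 xhi by (simp add: field_simps)
    ultimately show ?thesis by simp
  qed
  have K: "real K \<le> \<delta> * real m" unfolding K_def using \<delta> by (simp add: of_nat_floor)
  show ?thesis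
  proof (rule card_sum_free_family_le_powr[OF n m(1),
        where h = "\<lambda>k. real (?N + 1) * x ^ k * (exp (- \<gamma> * real k) + exp (- (\<gamma> * real L)))"])
    fix E assume E: "E \<subseteq> evens_upto n" "E \<noteq> {}" "real (card E) \<le> \<delta> * real m"
    have "card E \<le> m" using small_delta_bounds(3)[OF \<delta> E(3)] by linarith
    then show "real (card (indep_odd_sets n E (m - card E))) \<le> real (?N choose m)
        * (real (?N + 1) * x ^ card E * (exp (- \<gamma> * real (card E)) + exp (- (\<gamma> * real L))))"
      using card_indep_odd_sets_sparse_le[OF n m E(1,2)] unfolding x_def \<gamma>_def L_def
      by (simp add: mult_ac)
  next
    have "(\<Sum>k\<in>{1..K}. real (?N choose k)
          * (real (?N + 1) * x ^ k * (exp (- \<gamma> * real k) + exp (- (\<gamma> * real L)))))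
        = real (?N + 1) * (\<Sum>k\<in>{1..K}. real (?N choose k) * x ^ k * exp (- \<gamma> * real k))
          + real (?N + 1) * (\<Sum>k\<in>{1..K}. real (?N choose k) * x ^ k * exp (- (\<gamma> * real L)))"
      by (simp add: sum_distrib_left sum.distrib algebra_simps)
    also have "\<dots> \<le> exp (284 * real ?N / real m) + exp (6912 * real ?N / real m)"
      using tail_sum_sparse_decay_le[OF m x_def \<gamma>_def]
        tail_sum_sparse_capped_le[OF m x_def \<gamma>_def L6 \<delta>(1) small_delta_bounds(1)[OF \<delta> K] _ K]
        small_delta_bounds(2)[OF \<delta> K]
      by (intro add_mono) auto
    also have "\<dots> \<le> exp (2^46 * real ?N / real m) + exp (2^46 * real ?N / real m)"
      by (intro add_mono exp_scaled_mono) simp_all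
    also have "\<dots> = 2 * exp (2^46 * real ?N / real m)" by simp
    finally show "(\<Sum>k\<in>{1..nat \<lfloor>\<delta> * real m\<rfloor>}. real (?N choose k)
          * (real (?N + 1) * x ^ k * (exp (- \<gamma> * real k) + exp (- (\<gamma> * real L)))))
        \<le> 2 * exp (2^46 * real ?N / real m)"
      unfolding K_def .
  qed (use m x0 in auto)
qed

theorem card_sum_free_family_bound:
  assumes \<delta>: "0 < \<delta>" "\<delta> \<le> 1 / 2^100" and n: "even n"
  shows "real (card (sum_free_family n m \<delta>))
      \<le> 2 powr ((2^46 + 1) * real n / real m) * real (n div 2 choose m)"
proof -
  consider "m = 0" | "n div 2 < m" | "1 \<le> m" "m \<le> n div 2" "m \<le> 2^46"
    | "2^46 < m" "m \<le> n div 2" "19 * (n div 2) \<le> 20 * m"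
    | "1 \<le> m" "n div 2 < 100 * m" "20 * m < 19 * (n div 2)"
    | "1 \<le> m" "100 * m \<le> n div 2"
    by linarith
  then show ?thesis
  proof cases
    case 1
    then show ?thesis using card_sum_free_family_zero[of n \<delta>] by simp
  next
    case 2
    then show ?thesis using sum_free_family_eq_empty[OF n] by simp
  next
    case 3
    then show ?thesis by (intro card_sum_free_family_small_m) auto
  qed (use card_sum_free_family_dense[OF n _ _ _ \<delta>]
      card_sum_free_family_medium[OF n _ _ _ \<delta>] card_sum_free_family_sparse[OF n _ _ \<delta>] in auto)
qed

theorem proposition4p1:
  shows "\<exists>\<delta>\<^sub>0::real. \<delta>\<^sub>0 > 0 \<and> (\<exists>C::real. C > 0 \<and>
    (\<forall>\<delta>::real. \<forall>m n :: nat. 0 < \<delta> \<and> \<delta> \<le> \<delta>\<^sub>0 \<and> even n \<longrightarrow>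
      real (card {I. I \<subseteq> {1..n} \<and> sum_free I \<and> card I = m \<and>
                     real (card (I - odds_upto n)) \<le> \<delta> * real m})
        \<le> 2 powr (C * real n / real m) * real ((n div 2) choose m)))"
  using card_sum_free_family_bound unfolding sum_free_family_def
  by (intro exI[of "\<lambda>\<delta>\<^sub>0. \<delta>\<^sub>0 > 0 \<and> _ \<delta>\<^sub>0" "1 / 2^100"] conjI exI[of _ "2^46 + 1"]) auto

end
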